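(* Consider the RVI Q-learning algorithm below, for a weakly communicating finite SMDP satisfying (M), with $f$ satisfying (F), under requirements (R) and (R2). Let $K'>0$ be a constant and $$\delta_{n+1}=K'\max_{(s,a)}\big|(T_n(s,a)\vee\eta_n)^{-1}-t_{sa}^{-1}\big|.$$ Then, almost surely, $$\limsup_{n\to\infty}\frac{\ln(\delta_{n+1})}{\sum_{k=0}^n\alpha_k}\le\varsigma\max\Big\{\frac{\ell(\{\beta_n\})}{2},-1\Big\},$$ where $\varsigma$ is the constant in (R2)(ii).
   Context: $\mathcal{S},\mathcal{A}$ are finite, $d=|\mathcal{S}\times\mathcal{A}|$, and $\mathbf{1}$ is the all-ones vector. For each $(s,a)$, $\mathbb{P}_{sa}$ is a Borel probability measure on $\mathcal{S}\times\mathbb{R}_+\times\mathbb{R}$, the joint law of (next state $S$, holding time $\tau$, reward $R$). (M): (i) for some $\epsilon>0$, $\mathbb{P}_{sa}(\tau\le\epsilon)<1$ for all $(s,a)$; (ii) $\mathbb{E}_{sa}\tau^2,\mathbb{E}_{sa}R^2<\infty$. Let $r_{sa}=\mathbb{E}_{sa}R$, $t_{sa}=\mathbb{E}_{sa}\tau>0$, $p^a_{ss'}=\mathbb{P}_{sa}(S=s')$, and $t_{\min}=\min t_{sa}$. The SMDP is weakly communicating if there is a unique closed communicating class (each of its states reachable from every other under some policy, and no policy can leave it) and all other states are transient under every policy. (F): $g$ is SISTr at $x$ if $c\mapsto g(x+c\mathbf{1})$ is strictly increasing and onto $\mathbb{R}$; (i) $f$ is Lipschitz and SISTr at every point; (ii)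 $f(cx)/c\to f_\infty(x)$ pointwise as $c\uparrow\infty$, with $f_\infty$ SISTr at $0$. $L_f$ is the $\|\cdot\|_\infty$-Lipschitz constant of $f$, and $A_*=2/t_{\min}+L_f$. Algorithm: given $Q_0\in\mathbb{R}^d$ and $T_0\ge0$, for each $n$: - a random nonempty $Y_n\subset\mathcal{S}\times\mathcal{A}$ is chosen; - for each $(s,a)\in Y_n$, a fresh sample $(S^{sa}_{n+1},\tau^{sa}_{n+1},R^{sa}_{n+1})\sim\mathbb{P}_{sa}$ is generated conditionally on the past; - $\nu(n,(s,a))=\sum_{k<n}\mathbb{1}\{(s,a)\in Y_k\}$; - unselected components are unchanged, and for $(s,a)\in Y_n$: $$Q_{n+1}(s,a)=Q_n(s,a)+\alpha_{\nu(n,(s,a))}\Big(\frac{R^{sa}_{n+1}+\max_{a'}Q_n(S^{sa}_{n+1},a')-Q_n(s,a)}{T_n(s,a)\vee\eta_n}-f(Q_n)\Big),$$ $$T_{n+1}(s,a)=T_n(s,a)+\beta_{\nu(n,(s,a))}(\tau^{sa}_{n+1}-T_n(s,a)).$$ (R): (i) $\sum\alpha_n=\infty$, $\sum\alpha_n^2<\infty$, $\alpha_{n+1}\le\alpha_n$ eventually; for $x\in(0,1)$, $\sup_n\alpha_{[xn]}/\alpha_n<\infty$ and $\sum_{k\le[yn]}\alpha_k/\sum_{k\le n}\alpha_k\to1$ uniformly in $y\in[x,1]$. For a deterministic $\Delta>0$, $\liminf_n\nu(n,i)/n\ge\Delta$ a.s. for all $i$. For each $x>0$ and all $i,j$, $\lim_n\sum_{k=\nu(n,i)}^{\nu(N(n,x),i)}\alpha_k/\sum_{k=\nu(n,j)}^{\nu(N(n,x),j)}\alpha_k$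 exists a.s., where $N(n,x)=\min\{m>n:\sum_{k=n}^m\alpha_k\ge x\}$. (ii) $\beta_n\in[0,1]$, $\sum\beta_n=\infty$, $\sum\beta_n^2<\infty$. (iii) $\eta_n>0$, $\eta_n\to0$. (R2): for positive $\{a_n\}$, let $\ell(\{a_n\})=\limsup_n\ln(a_n)/\sum_{k=0}^na_k$. (i) Either - $\alpha_n=1/(An)$ with $A/2>A_*$, and a.s. for all $i$: $\nu(n,i)/n\to p_i\in(0,1]$ and $\limsup_nn^\gamma|\nu(n,i)/n-p_i|<\infty$ for a deterministic $\gamma>0$ with $\gamma A>A_*$; or - $\alpha_n=1/(An\ln n)$ with $A>A_*$. In both cases, $\alpha_n=1/A$ when the denominator is $0$. (ii) For some $\varsigma>A_*$: $\beta_n\ge\varsigma\alpha_n$ for all large $n$, and $-\varsigma\ell(\{\beta_n\})/2>A_*$. *)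

theory Defs
  imports "HOL-Probability.Probability"
begin

text \<open>Joint law space of (next state S, holding time tau, reward R).\<close>
definition sample_space :: "('s \<times> real \<times> real) measure" where
  "sample_space = count_space UNIV \<Otimes>\<^sub>M (borel \<Otimes>\<^sub>M borel)"

definition rmean :: "('s \<times> 'a \<Rightarrow> ('s \<times> real \<times> real) measure) \<Rightarrow> 's \<times> 'a \<Rightarrow> real" where
  "rmean P i = (\<integral>x. snd (snd x) \<partial>P i)"

definition tmean :: "('s \<times> 'a \<Rightarrow> ('s \<times> real \<times> real) measure) \<Rightarrow> 's \<times> 'a \<Rightarrow> real" where
  "tmean P i = (\<integral>x. fst (snd x) \<partial>P i)"

definition ptrans :: "('s \<times> 'a \<Rightarrow> ('s \<times> real \<times> real) measure) \<Rightarrow> 's \<Rightarrow> 'a \<Rightarrow> 's \<Rightarrow> real" where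
  "ptrans P s a s' = measure (P (s, a)) {x. fst x = s'}"

definition tmin :: "('s \<times> 'a \<Rightarrow> ('s \<times> real \<times> real) measure) \<Rightarrow> real" where
  "tmin P = Min (range (tmean P))"

definition cond_M :: "('s \<times> 'a \<Rightarrow> ('s \<times> real \<times> real) measure) \<Rightarrow> bool" where
  "cond_M P \<longleftrightarrow>
     (\<exists>\<epsilon>>0. \<forall>i. measure (P i) {x. fst (snd x) \<le> \<epsilon>} < 1) \<and>
     (\<forall>i. integrable (P i) (\<lambda>x. (fst (snd x))\<^sup>2) \<and> integrable (P i) (\<lambda>x. (snd (snd x))\<^sup>2))"

definition pol_edges :: "('s \<Rightarrow> 'a \<Rightarrow> 's \<Rightarrow> real) \<Rightarrow> ('s \<Rightarrow> 'a) \<Rightarrow> ('s \<times> 's) set" where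
  "pol_edges p \<pi> = {(s, s'). p s (\<pi> s) s' > 0}"

definition reachable_under :: "('s \<Rightarrow> 'a \<Rightarrow> 's \<Rightarrow> real) \<Rightarrow> ('s \<Rightarrow> 'a) \<Rightarrow> 's \<Rightarrow> 's \<Rightarrow> bool" where
  "reachable_under p \<pi> s s' \<longleftrightarrow> (s, s') \<in> (pol_edges p \<pi>)\<^sup>*"

definition transient_under :: "('s \<Rightarrow> 'a \<Rightarrow> 's \<Rightarrow> real) \<Rightarrow> ('s \<Rightarrow> 'a) \<Rightarrow> 's \<Rightarrow> bool" where
  "transient_under p \<pi> s \<longleftrightarrow> (\<exists>s'. reachable_under p \<pi> s s' \<and> \<not> reachable_under p \<pi> s' s)"

definition closed_comm_class :: "('s \<Rightarrow> 'a \<Rightarrow> 's \<Rightarrow> real) \<Rightarrow> 's set \<Rightarrow> bool" where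
  "closed_comm_class p C \<longleftrightarrow> C \<noteq> {} \<and>
     (\<forall>s\<in>C. \<forall>s'\<in>C. \<exists>\<pi>. reachable_under p \<pi> s s') \<and>
     (\<forall>s\<in>C. \<forall>a s'. p s a s' > 0 \<longrightarrow> s' \<in> C)"

definition weakly_communicating :: "('s \<Rightarrow> 'a \<Rightarrow> 's \<Rightarrow> real) \<Rightarrow> bool" where
  "weakly_communicating p \<longleftrightarrow>
     (\<exists>C. closed_comm_class p C \<and> (\<forall>C'. closed_comm_class p C' \<longrightarrow> C' = C) \<and>
          (\<forall>\<pi> s. s \<notin> C \<longrightarrow> transient_under p \<pi> s))"

definition sup_norm :: "('i::finite \<Rightarrow> real) \<Rightarrow> real" where
  "sup_norm x = Max (range (\<lambda>i. \<bar>x i\<bar>))"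

definition SISTr :: "(('i \<Rightarrow> real) \<Rightarrow> real) \<Rightarrow> ('i \<Rightarrow> real) \<Rightarrow> bool" where
  "SISTr g x \<longleftrightarrow> strict_mono (\<lambda>c::real. g (\<lambda>i. x i + c)) \<and> surj (\<lambda>c::real. g (\<lambda>i. x i + c))"

definition sup_lipschitz :: "(('i::finite \<Rightarrow> real) \<Rightarrow> real) \<Rightarrow> bool" where
  "sup_lipschitz f \<longleftrightarrow> (\<exists>L. \<forall>x y. \<bar>f x - f y\<bar> \<le> L * sup_norm (\<lambda>i. x i - y i))"

definition lip_const :: "(('i::finite \<Rightarrow> real) \<Rightarrow> real) \<Rightarrow> real" where
  "lip_const f = Inf {L. L \<ge> 0 \<and> (\<forall>x y. \<bar>f x - f y\<bar> \<le> L * sup_norm (\<lambda>i. x i - y i))}"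

definition cond_F :: "(('i::finite \<Rightarrow> real) \<Rightarrow> real) \<Rightarrow> bool" where
  "cond_F f \<longleftrightarrow> sup_lipschitz f \<and> (\<forall>x. SISTr f x) \<and>
     (\<exists>finf. (\<forall>x. ((\<lambda>c::real. f (\<lambda>i. c * x i) / c) \<longlongrightarrow> finf x) at_top) \<and> SISTr finf (\<lambda>i. 0))"

definition A_star :: "('s::finite \<times> 'a::finite \<Rightarrow> ('s \<times> real \<times> real) measure) \<Rightarrow> (('s \<times> 'a \<Rightarrow> real) \<Rightarrow> real) \<Rightarrow> real" where
  "A_star P f = 2 / tmin P + lip_const f"

definition nu :: "(nat \<Rightarrow> 'w \<Rightarrow> 'i set) \<Rightarrow> nat \<Rightarrow> 'i \<Rightarrow> 'w \<Rightarrow> nat" where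
  "nu Y n i w = card {k. k < n \<and> i \<in> Y k w}"

text \<open>X n i w is the sample (S, tau, R) with index n+1 for component i.\<close>
primrec QT :: "('s \<times> 'a \<Rightarrow> real) \<Rightarrow> ('s \<times> 'a \<Rightarrow> real) \<Rightarrow> (nat \<Rightarrow> real) \<Rightarrow> (nat \<Rightarrow> real) \<Rightarrow> (nat \<Rightarrow> real)
   \<Rightarrow> (('s \<times> 'a \<Rightarrow> real) \<Rightarrow> real) \<Rightarrow> (nat \<Rightarrow> 'w \<Rightarrow> ('s \<times> 'a) set)
   \<Rightarrow> (nat \<Rightarrow> 's \<times> 'a \<Rightarrow> 'w \<Rightarrow> 's \<times> real \<times> real)
   \<Rightarrow> nat \<Rightarrow> 'w \<Rightarrow> ('s \<times> 'a \<Rightarrow> real) \<times> ('s \<times> 'a \<Rightarrow> real)" where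
  "QT Q0 T0 \<alpha> \<beta> \<eta> f Y X 0 w = (Q0, T0)"
| "QT Q0 T0 \<alpha> \<beta> \<eta> f Y X (Suc n) w =
     (let (Q, T) = QT Q0 T0 \<alpha> \<beta> \<eta> f Y X n w in
      ((\<lambda>i. if i \<in> Y n w then
              Q i + \<alpha> (nu Y n i w) *
                ((snd (snd (X n i w)) + Max (range (\<lambda>a'. Q (fst (X n i w), a'))) - Q i)
                   / max (T i) (\<eta> n) - f Q)
            else Q i),
       (\<lambda>i. if i \<in> Y n w then T i + \<beta> (nu Y n i w) * (fst (snd (X n i w)) - T i) else T i)))"

definition Nidx :: "(nat \<Rightarrow> real) \<Rightarrow> nat \<Rightarrow> real \<Rightarrow> nat" where
  "Nidx \<alpha> n x = (LEAST m. m > n \<and> (\<Sum>k=n..m. \<alpha> k) \<ge> x)"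

definition ell :: "(nat \<Rightarrow> real) \<Rightarrow> ereal" where
  "ell a = limsup (\<lambda>n. ereal (ln (a n) / (\<Sum>k\<le>n. a k)))"

definition eln :: "real \<Rightarrow> ereal" where
  "eln x = (if x = 0 then -\<infinity> else ereal (ln x))"

definition cond_R_alpha :: "(nat \<Rightarrow> real) \<Rightarrow> bool" where
  "cond_R_alpha \<alpha> \<longleftrightarrow>
     filterlim (\<lambda>n. \<Sum>k\<le>n. \<alpha> k) at_top sequentially \<and>
     summable (\<lambda>n. (\<alpha> n)\<^sup>2) \<and>
     (\<forall>\<^sub>F n in sequentially. \<alpha> (Suc n) \<le> \<alpha> n) \<and>
     (\<forall>x::real. 0 < x \<and> x < 1 \<longrightarrow>
        bdd_above (range (\<lambda>n. \<alpha> (nat \<lfloor>x * real n\<rfloor>) / \<alpha> n)) \<and>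
        uniform_limit {x..1} (\<lambda>n y. (\<Sum>k\<le>nat \<lfloor>y * real n\<rfloor>. \<alpha> k) / (\<Sum>k\<le>n. \<alpha> k))
           (\<lambda>y. 1) sequentially)"

definition cond_R_beta :: "(nat \<Rightarrow> real) \<Rightarrow> bool" where
  "cond_R_beta \<beta> \<longleftrightarrow> (\<forall>n. 0 \<le> \<beta> n \<and> \<beta> n \<le> 1) \<and>
     filterlim (\<lambda>n. \<Sum>k\<le>n. \<beta> k) at_top sequentially \<and> summable (\<lambda>n. (\<beta> n)\<^sup>2)"

end

theory Submission
  imports Defs
begin

lemma abs_le_one_plus_square: "\<bar>x::real\<bar> \<le> 1 + x\<^sup>2"
proof (cases "\<bar>x\<bar> \<le> 1")
  case False
  then have "\<bar>x\<bar> * 1 \<le> \<bar>x\<bar> * \<bar>x\<bar>" by (intro mult_left_mono) auto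
  then show ?thesis by (simp add: power2_eq_square)
qed (simp add: add_increasing2)

locale filtered_prob_space = prob_space M for M :: "'w measure" +
  fixes F :: "nat \<Rightarrow> 'w measure"
  assumes subalgebra_F: "\<And>n. subalgebra M (F n)"
    and sets_F_Suc: "\<And>n. sets (F n) \<subseteq> sets (F (Suc n))"
begin

lemma space_F: "space (F n) = space M"
  using subalgebra_F[of n] by (simp add: subalgebra_def)

lemma sets_F_subset: "sets (F n) \<subseteq> sets M"
  using subalgebra_F[of n] by (simp add: subalgebra_def)

lemma sets_F_mono: "k \<le> n \<Longrightarrow> sets (F k) \<subseteq> sets (F n)"
  by (rule lift_Suc_mono_le[of "\<lambda>n. sets (F n)"]) (use sets_F_Suc in auto)

lemma measurable_F_mono: "k \<le> n \<Longrightarrow> f \<in> measurable (F k) N \<Longrightarrow> f \<in> measurable (F n) N"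
  by (rule measurable_from_subalg) (auto simp: subalgebra_def space_F sets_F_mono)

text \<open>Ville's maximal inequality, for a nonnegative adapted process that is only required to
  be a supermartingale on the events where it is still below the level \<open>a\<close>: the process stopped
  on first reaching \<open>a\<close> has expectation at most \<open>A\<^sub>0\<close>.\<close>

lemma maximal_inequality:
  fixes V :: "nat \<Rightarrow> 'w \<Rightarrow> real" and A\<^sub>0 a :: real
  assumes V_meas: "\<And>n. V n \<in> borel_measurable (F n)"
    and V_nonneg: "\<And>n w. 0 \<le> V n w"
    and V_0: "\<And>w. w \<in> space M \<Longrightarrow> V 0 w \<le> A\<^sub>0"
    and integrable_below: "\<And>n G. G \<in> sets (F n) \<Longrightarrow> (\<And>w. w \<in> G \<Longrightarrow> V n w < a) \<Longrightarrow>
        integrable M (\<lambda>w. indicator G w * V (Suc n) w)"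
    and supermartingale_below: "\<And>n G. G \<in> sets (F n) \<Longrightarrow> (\<And>w. w \<in> G \<Longrightarrow> V n w < a) \<Longrightarrow>
        (\<integral>w. indicator G w * V (Suc n) w \<partial>M) \<le> (\<integral>w. indicator G w * V n w \<partial>M)"
    and a: "0 < a"
  shows "prob {w \<in> space M. \<exists>k\<le>n. a \<le> V k w} \<le> A\<^sub>0 / a"
proof -
  define G where "G n = {w \<in> space M. \<forall>k\<le>n. V k w < a}" for n
  have G_F: "G n \<in> sets (F n)" for n
  proof -
    have "{w \<in> space (F n). \<forall>k\<in>{..n}. V k w < a} \<in> sets (F n)"
    proof (rule sets.sets_Collect_finite_All)
      fix k assume "k \<in> {..n}"
      then have "V k \<in> borel_measurable (F n)"
        using measurable_F_mono[OF _ V_meas] by simp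
      then show "{w \<in> space (F n). V k w < a} \<in> sets (F n)"
        using measurable_sets[of "V k" "F n" borel "{..<a}"] by (simp add: vimage_def Int_def conj_commute)
    qed simp
    then show ?thesis unfolding G_def space_F Ball_def atMost_iff .
  qed
  have G_M: "G n \<in> events" for n
    using G_F sets_F_subset by blast
  have V_M: "V n \<in> borel_measurable M" for n
    using V_meas by (rule measurable_from_subalg[OF subalgebra_F])
  define U where "U n w = (if w \<in> G n then V n w else a)" for n w
  have U_bounds: "0 \<le> U n w" "U n w \<le> a" for n w
    unfolding U_def G_def using V_nonneg[of n w] a by auto
  have U_integrable: "integrable M (U n)" for n
  proof (rule integrable_const_bound[where B=a])
    show "U n \<in> borel_measurable M"
      unfolding U_def using G_M V_M by (intro measurable_If_set) auto
  qed (use U_bounds in auto)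
  have indicator_integrable: "integrable M (\<lambda>w. a * indicator (space M - G n) w)" for n
    using G_M by (intro integrable_mult_right integrable_real_indicator) (auto simp: less_top[symmetric] emeasure_finite)
  have U_expectation: "integral\<^sup>L M (U n) \<le> A\<^sub>0" for n
  proof (induction n)
    case 0
    have "integral\<^sup>L M (U 0) \<le> (\<integral>w. A\<^sub>0 \<partial>M)"
    proof (intro integral_mono U_integrable)
      fix w assume "w \<in> space M"
      then show "U 0 w \<le> A\<^sub>0" using V_0[of w] by (auto simp: U_def G_def)
    qed simp
    then show ?case by (simp add: prob_space)
  next
    case (Suc n)
    have below: "w \<in> G n \<Longrightarrow> V n w < a" for w unfolding G_def by auto
    have stopped_integrable: "integrable M (\<lambda>w. indicator (G n) w * V n w)"
    proof (rule integrable_const_bound[where B=a])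
      show "AE w in M. norm (indicator (G n) w * V n w) \<le> a"
        using below a V_nonneg by (auto simp: indicator_def less_imp_le)
    qed (use G_M V_M in simp)
    have "integral\<^sup>L M (U (Suc n))
        \<le> (\<integral>w. indicator (G n) w * V (Suc n) w + a * indicator (space M - G n) w \<partial>M)"
    proof (intro integral_mono U_integrable Bochner_Integration.integrable_add integrable_below[OF G_F below] indicator_integrable)
      fix w assume "w \<in> space M"
      then show "U (Suc n) w \<le> indicator (G n) w * V (Suc n) w + a * indicator (space M - G n) w"
        by (cases "w \<in> G n") (auto simp: U_def G_def le_Suc_eq not_less)
    qed
    also have "\<dots> \<le> (\<integral>w. indicator (G n) w * V n w + a * indicator (space M - G n) w \<partial>M)"
      using integrable_below[OF G_F below] supermartingale_below[OF G_F below]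
        stopped_integrable indicator_integrable
      by (simp add: Bochner_Integration.integral_add)
    also have "\<dots> = integral\<^sup>L M (U n)"
      by (intro Bochner_Integration.integral_cong) (auto simp: U_def indicator_def G_def)
    finally show ?case using Suc by simp
  qed
  have "a * prob (space M - G n) \<le> integral\<^sup>L M (U n)"
  proof -
    have "(\<integral>w. a * indicator (space M - G n) w \<partial>M) \<le> integral\<^sup>L M (U n)"
      using V_nonneg a by (intro integral_mono indicator_integrable U_integrable)
        (auto simp: U_def indicator_def)
    then show ?thesis using G_M by simp
  qed
  then have "a * prob (space M - G n) \<le> A\<^sub>0"
    using U_expectation by (rule order.trans)
  moreover have "{w \<in> space M. \<exists>k\<le>n. a \<le> V k w} = space M - G n"
    unfolding G_def by (auto simp: not_less)
  ultimately show ?thesis using a by (simp add: field_simps)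
qed

end

lemma (in prob_space) AE_bounded_of_maximal_inequality:
  fixes V :: "nat \<Rightarrow> 'a \<Rightarrow> real"
  assumes V_meas: "\<And>n. V n \<in> borel_measurable M"
    and maximal: "\<And>a n. 0 < a \<Longrightarrow> prob {w \<in> space M. \<exists>k\<le>n. a \<le> V k w} \<le> A\<^sub>0 / a"
  shows "AE w in M. \<exists>C. \<forall>n. V n w \<le> C"
proof -
  define exceeds where "exceeds a n = {w \<in> space M. \<exists>k\<le>n. a \<le> V k w}" for a n
  have exceeds_events: "exceeds a n \<in> events" for a n
  proof -
    have [measurable]: "V k \<in> borel_measurable M" for k by (rule V_meas)
    have "exceeds a n = (\<Union>k\<le>n. {w \<in> space M. a \<le> V k w})"
      unfolding exceeds_def by auto
    then show ?thesis by auto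
  qed
  have ever_exceeds: "prob (\<Union>n. exceeds a n) \<le> A\<^sub>0 / a" if "0 < a" for a
  proof (rule LIMSEQ_le_const2)
    show "(\<lambda>n. prob (exceeds a n)) \<longlonglongrightarrow> prob (\<Union>n. exceeds a n)"
    proof (rule finite_Lim_measure_incseq)
      show "range (exceeds a) \<subseteq> events" using exceeds_events by blast
      show "incseq (exceeds a)"
        unfolding incseq_def exceeds_def by (blast intro: order_trans)
    qed
    show "\<exists>N. \<forall>n\<ge>N. prob (exceeds a n) \<le> A\<^sub>0 / a"
      using maximal[OF that] unfolding exceeds_def by blast
  qed
  define unbounded where "unbounded = (\<Inter>N. \<Union>n. exceeds (real (Suc N)) n)"
  have unbounded_events: "unbounded \<in> events"
    using exceeds_events by (auto simp: unbounded_def)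
  have "prob unbounded \<le> A\<^sub>0 / real (Suc N)" for N
  proof -
    have "prob unbounded \<le> prob (\<Union>n. exceeds (real (Suc N)) n)"
      using exceeds_events unfolding unbounded_def by (intro finite_measure_mono) auto
    also have "\<dots> \<le> A\<^sub>0 / real (Suc N)"
      by (rule ever_exceeds) simp
    finally show ?thesis .
  qed
  then have "prob unbounded \<le> 0"
    by (intro LIMSEQ_le_const[OF LIMSEQ_Suc[OF lim_const_over_n[of A\<^sub>0]]]) blast
  then have "unbounded \<in> null_sets M"
    using unbounded_events measure_nonneg[of M unbounded]
    by (simp add: emeasure_eq_measure null_sets_def)
  then show ?thesis
  proof (rule AE_I')
    show "{w \<in> space M. \<not> (\<exists>C. \<forall>n. V n w \<le> C)} \<subseteq> unbounded"
    proof safe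
      fix w assume w: "w \<in> space M" and unbdd: "\<not> (\<exists>C. \<forall>n. V n w \<le> C)"
      show "w \<in> unbounded" unfolding unbounded_def exceeds_def
      proof safe
        fix N
        obtain k where "real (Suc N) < V k w" using unbdd by (meson not_le)
        then show "w \<in> (\<Union>n. {w \<in> space M. \<exists>k\<le>n. real (Suc N) \<le> V k w})"
          using w by (intro UN_I[of k]) auto
      qed
    qed
  qed
qed

lemma measurable_fst_snd_sample_space:
  "(\<lambda>x. fst (snd x)) \<in> borel_measurable (sample_space :: ('s \<times> real \<times> real) measure)"
  unfolding sample_space_def by measurable

locale sampling_scheme = filtered_prob_space M F
  for M :: "'w measure" and F +
  fixes P :: "'i \<Rightarrow> ('s \<times> real \<times> real) measure"
    and Y :: "nat \<Rightarrow> 'w \<Rightarrow> 'i set"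
    and X :: "nat \<Rightarrow> 'i \<Rightarrow> 'w \<Rightarrow> 's \<times> real \<times> real"
  assumes prob_space_P: "\<And>i. prob_space (P i)"
    and sets_P: "\<And>i. sets (P i) = sets sample_space"
    and Y_meas: "\<And>n i. {w \<in> space M. i \<in> Y n w} \<in> sets (F n)"
    and X_meas: "\<And>n i. X n i \<in> measurable (F (Suc n)) sample_space"
    and X_law: "\<And>n i A B. A \<in> sets sample_space \<Longrightarrow> B \<in> sets (F n) \<Longrightarrow>
        measure M {w \<in> space M. w \<in> B \<and> i \<in> Y n w \<and> X n i w \<in> A}
          = measure (P i) A * measure M {w \<in> space M. w \<in> B \<and> i \<in> Y n w}"
begin

definition selected :: "nat \<Rightarrow> 'i \<Rightarrow> 'w set" where
  "selected n i = {w \<in> space M. i \<in> Y n w}"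

lemma selected_F: "selected n i \<in> sets (F n)"
  unfolding selected_def by (rule Y_meas)

lemma selected_events: "selected n i \<in> events"
  using subsetD[OF sets_F_subset selected_F] .

text \<open>\<open>M\<close> restricted to the event that \<open>i\<close> is selected at step \<open>n\<close>, and its trace on the past
  \<open>F n\<close>.  By \<open>X_law\<close>, under the former the pair (past, new sample) has the law
  \<open>selected_past n i \<Otimes>\<^sub>M P i\<close>.\<close>

definition selected_measure :: "nat \<Rightarrow> 'i \<Rightarrow> 'w measure" where
  "selected_measure n i = density M (\<lambda>w. ennreal (indicator (selected n i) w))"

definition selected_past :: "nat \<Rightarrow> 'i \<Rightarrow> 'w measure" where
  "selected_past n i = restr_to_subalg (selected_measure n i) (F n)"

lemma sets_selected_measure: "sets (selected_measure n i) = sets M"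
  by (simp add: selected_measure_def)

lemma space_selected_measure: "space (selected_measure n i) = space M"
  by (simp add: selected_measure_def)

lemma emeasure_selected_measure:
  "A \<in> sets M \<Longrightarrow> emeasure (selected_measure n i) A = emeasure M (A \<inter> selected n i)"
  unfolding selected_measure_def ennreal_indicator Int_commute[of A]
  by (rule emeasure_restricted[OF selected_events])

lemma subalgebra_selected_measure: "subalgebra (selected_measure n i) (F m)"
  using subalgebra_F[of m] by (simp add: subalgebra_def sets_selected_measure space_selected_measure)

lemma finite_measure_selected_past: "finite_measure (selected_past n i)"
  unfolding selected_past_def
proof (rule finite_measure_restr_to_subalg[OF subalgebra_selected_measure])
  show "finite_measure (selected_measure n i)"
  proof (rule finite_measureI)
    have "emeasure (selected_measure n i) (space (selected_measure n i))
        = emeasure M (space M \<inter> selected n i)"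
      unfolding space_selected_measure by (rule emeasure_selected_measure[OF sets.top])
    then show "emeasure (selected_measure n i) (space (selected_measure n i)) \<noteq> \<infinity>"
      using emeasure_finite[of "space M \<inter> selected n i"] by (simp only: infinity_ennreal_def not_False_eq_True)
  qed
qed

lemma sets_selected_past: "sets (selected_past n i) = sets (F n)"
  unfolding selected_past_def by (rule sets_restr_to_subalg[OF subalgebra_selected_measure])

lemma measurable_pair_selected_sample:
  "(\<lambda>w. (w, X n i w)) \<in> measurable (selected_measure n i) (selected_past n i \<Otimes>\<^sub>M P i)"
proof -
  have "(\<lambda>w. w) \<in> measurable (F n) (selected_past n i)"
    using measurable_ident_sets[OF sets_selected_past[symmetric]] .
  then have "(\<lambda>w. w) \<in> measurable (selected_measure n i) (selected_past n i)"
    by (rule measurable_from_subalg[OF subalgebra_selected_measure])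
  moreover have "X n i \<in> measurable (F (Suc n)) (P i)"
    using X_meas[of n i] sets_P[of i] measurable_cong_sets by blast
  then have "X n i \<in> measurable (selected_measure n i) (P i)"
    by (rule measurable_from_subalg[OF subalgebra_selected_measure])
  ultimately show ?thesis
    by (rule measurable_Pair)
qed

lemma pair_selected_past_sample:
  "selected_past n i \<Otimes>\<^sub>M P i
     = distr (selected_measure n i) (selected_past n i \<Otimes>\<^sub>M P i) (\<lambda>w. (w, X n i w))"
  (is "?prod = distr ?N ?prod ?pair")
proof -
  interpret P: prob_space "P i" by (rule prob_space_P)
  interpret past: finite_measure "selected_past n i" by (rule finite_measure_selected_past)
  note pair_meas = measurable_pair_selected_sample[of n i]
  show ?thesis
  proof (rule pair_measure_eqI)
    show "sigma_finite_measure (selected_past n i)" "sigma_finite_measure (P i)"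
      by (fact past.sigma_finite_measure_axioms P.sigma_finite_measure_axioms)+
    fix A B assume A: "A \<in> sets (selected_past n i)" and B: "B \<in> sets (P i)"
    have A_F: "A \<in> sets (F n)" using A unfolding sets_selected_past .
    have B_S: "B \<in> sets sample_space" using B unfolding sets_P .
    have A_M: "A \<in> sets M" using subsetD[OF sets_F_subset A_F] .
    have AB: "A \<times> B \<in> sets ?prod" using pair_measureI[OF A B] .
    have pre: "?pair -` (A \<times> B) \<inter> space ?N = {w \<in> space M. w \<in> A \<and> X n i w \<in> B}"
      by (auto simp: space_selected_measure)
    have pre_M: "{w \<in> space M. w \<in> A \<and> X n i w \<in> B} \<in> sets M"
      using measurable_sets[OF pair_meas AB] unfolding pre sets_selected_measure .
    have "emeasure (distr ?N ?prod ?pair) (A \<times> B) = emeasure ?N {w \<in> space M. w \<in> A \<and> X n i w \<in> B}"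
      unfolding emeasure_distr[OF pair_meas AB] pre ..
    also have "\<dots> = emeasure M ({w \<in> space M. w \<in> A \<and> X n i w \<in> B} \<inter> selected n i)"
      using pre_M by (rule emeasure_selected_measure)
    also have "\<dots> = emeasure M {w \<in> space M. w \<in> A \<and> i \<in> Y n w \<and> X n i w \<in> B}"
      by (rule arg_cong[where f="emeasure M"]) (auto simp: selected_def)
    also have "\<dots> = ennreal (measure (P i) B * measure M (A \<inter> selected n i))"
    proof -
      have "A \<inter> selected n i = {w \<in> space M. w \<in> A \<and> i \<in> Y n w}"
        using sets.sets_into_space[OF A_M] by (auto simp: selected_def)
      then show ?thesis using X_law[OF B_S A_F] by (simp add: emeasure_eq_measure)
    qed
    also have "\<dots> = emeasure (selected_past n i) A * emeasure (P i) B"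
    proof -
      have "emeasure (selected_past n i) A = emeasure M (A \<inter> selected n i)"
        unfolding selected_past_def emeasure_restr_to_subalg[OF subalgebra_selected_measure A_F]
        using A_M by (rule emeasure_selected_measure)
      then show ?thesis
        by (simp add: emeasure_eq_measure P.emeasure_eq_measure ennreal_mult'' mult.commute)
    qed
    finally show "emeasure (selected_past n i) A * emeasure (P i) B = emeasure (distr ?N ?prod ?pair) (A \<times> B)"
      by (rule sym)
  qed (simp only: sets_distr)
qed

end

context sampling_scheme
begin

lemma integral_selected_measure:
  fixes f :: "'w \<Rightarrow> real"
  assumes "f \<in> borel_measurable M"
  shows "integrable (selected_measure n i) f \<longleftrightarrow> integrable M (\<lambda>w. indicator (selected n i) w * f w)"
    and "integral\<^sup>L (selected_measure n i) f = (\<integral>w. indicator (selected n i) w * f w \<partial>M)"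
  using integrable_density[OF assms, of "indicator (selected n i)"]
    integral_density[OF assms, of "indicator (selected n i)"] selected_events
  by (simp_all add: selected_measure_def)

lemma integral_selected_sample:
  fixes g :: "'w \<Rightarrow> real" and \<phi> :: "'s \<times> real \<times> real \<Rightarrow> real"
  assumes g: "g \<in> borel_measurable (F n)" and g_bounded: "\<And>w. w \<in> space M \<Longrightarrow> \<bar>g w\<bar> \<le> B"
    and \<phi>: "\<phi> \<in> borel_measurable sample_space" "integrable (P i) \<phi>"
  shows "integrable M (\<lambda>w. indicator (selected n i) w * g w * \<phi> (X n i w))"
    and "(\<integral>w. indicator (selected n i) w * g w * \<phi> (X n i w) \<partial>M)
          = (\<integral>w. indicator (selected n i) w * g w \<partial>M) * (\<integral>x. \<phi> x \<partial>P i)"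
proof -
  interpret P: prob_space "P i" by (rule prob_space_P)
  interpret past: finite_measure "selected_past n i" by (rule finite_measure_selected_past)
  interpret pair_sigma_finite "selected_past n i" "P i" ..
  let ?N = "selected_measure n i" and ?prod = "selected_past n i \<Otimes>\<^sub>M P i"
  note pair_meas = measurable_pair_selected_sample[of n i]
  have g_past: "g \<in> borel_measurable (selected_past n i)"
    using g sets_selected_past measurable_cong_sets by blast
  have \<phi>_P: "\<phi> \<in> borel_measurable (P i)"
    using \<phi>(1) sets_P measurable_cong_sets by blast
  have gX_M: "(\<lambda>w. g w * \<phi> (X n i w)) \<in> borel_measurable M"
  proof -
    have "(\<lambda>w. \<phi> (X n i w)) \<in> borel_measurable (F (Suc n))"
      using X_meas \<phi>(1) by (rule measurable_compose)
    then show ?thesis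
      using measurable_from_subalg[OF subalgebra_F g] measurable_from_subalg[OF subalgebra_F]
      by (intro borel_measurable_times)
  qed
  have prod_meas: "(\<lambda>(w, x). g w * \<phi> x) \<in> borel_measurable ?prod"
    using g_past \<phi>_P by measurable
  have g_integrable: "integrable (selected_past n i) g"
    using g_bounded g_past by (intro past.integrable_const_bound[where B=B])
      (auto simp: selected_past_def space_restr_to_subalg space_selected_measure)
  have prod_integrable: "integrable ?prod (\<lambda>(w, x). g w * \<phi> x)"
  proof (rule Fubini_integrable[OF prod_meas])
    show "integrable (selected_past n i) (\<lambda>w. \<integral>x. norm (case (w, x) of (w, x) \<Rightarrow> g w * \<phi> x) \<partial>P i)"
      using g_integrable by (simp add: abs_mult)
  qed (use \<phi>(2) in simp)
  have "integrable ?N (\<lambda>w. g w * \<phi> (X n i w))"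
    using prod_integrable pair_meas prod_meas
    by (subst (asm) pair_selected_past_sample) (simp add: integrable_distr_eq)
  then show "integrable M (\<lambda>w. indicator (selected n i) w * g w * \<phi> (X n i w))"
    unfolding integral_selected_measure(1)[OF gX_M] by (simp add: mult.assoc)
  have "(\<integral>w. indicator (selected n i) w * g w * \<phi> (X n i w) \<partial>M) = (\<integral>w. g w * \<phi> (X n i w) \<partial>?N)"
    unfolding integral_selected_measure(2)[OF gX_M] by (simp add: mult.assoc)
  also have "\<dots> = (\<integral>z. (\<lambda>(w, x). g w * \<phi> x) z \<partial>distr ?N ?prod (\<lambda>w. (w, X n i w)))"
    using pair_meas prod_meas by (simp add: integral_distr)
  also have "\<dots> = (\<integral>z. (\<lambda>(w, x). g w * \<phi> x) z \<partial>?prod)"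
    unfolding pair_selected_past_sample[symmetric] ..
  also have "\<dots> = (\<integral>w. g w \<partial>selected_past n i) * (\<integral>x. \<phi> x \<partial>P i)"
    using integral_fst'[OF prod_integrable] by simp
  also have "(\<integral>w. g w \<partial>selected_past n i) = (\<integral>w. indicator (selected n i) w * g w \<partial>M)"
    unfolding selected_past_def integral_subalgebra2[OF subalgebra_selected_measure g]
    using measurable_from_subalg[OF subalgebra_F g] by (rule integral_selected_measure(2))
  finally show "(\<integral>w. indicator (selected n i) w * g w * \<phi> (X n i w) \<partial>M)
      = (\<integral>w. indicator (selected n i) w * g w \<partial>M) * (\<integral>x. \<phi> x \<partial>P i)" .
qed

end

primrec hold_est :: "(nat \<Rightarrow> 'w \<Rightarrow> 'i set) \<Rightarrow> (nat \<Rightarrow> 'i \<Rightarrow> 'w \<Rightarrow> 's \<times> real \<times> real) \<Rightarrow> ('i \<Rightarrow> real)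
    \<Rightarrow> (nat \<Rightarrow> real) \<Rightarrow> nat \<Rightarrow> 'w \<Rightarrow> 'i \<Rightarrow> real" where
  "hold_est Y X T0 \<beta> 0 w = T0"
| "hold_est Y X T0 \<beta> (Suc n) w = (\<lambda>i. if i \<in> Y n w
      then hold_est Y X T0 \<beta> n w i + \<beta> (nu Y n i w) * (fst (snd (X n i w)) - hold_est Y X T0 \<beta> n w i)
      else hold_est Y X T0 \<beta> n w i)"

lemma snd_QT: "snd (QT Q0 T0 \<alpha> \<beta> \<eta> f Y X n w) = hold_est Y X T0 \<beta> n w"
  by (induction n) (auto simp: Let_def split: prod.split)

lemma nu_0 [simp]: "nu Y 0 i w = 0"
  by (simp add: nu_def)

lemma nu_Suc: "nu Y (Suc n) i w = (if i \<in> Y n w then Suc (nu Y n i w) else nu Y n i w)"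
proof -
  have "{k. k < Suc n \<and> i \<in> Y k w} = {k. k < n \<and> i \<in> Y k w} \<union> (if i \<in> Y n w then {n} else {})"
    by (auto simp: less_Suc_eq)
  then show ?thesis by (simp add: nu_def)
qed

lemma nu_le: "nu Y n i w \<le> n"
  unfolding nu_def using card_mono[of "{..<n}" "{k. k < n \<and> i \<in> Y k w}"] by auto

context sampling_scheme
begin

lemma selected_F_Suc: "{w \<in> space (F (Suc n)). i \<in> Y n w} \<in> sets (F (Suc n))"
  using subsetD[OF sets_F_Suc Y_meas[where n=n and i=i]] unfolding space_F .

lemma measurable_nu: "(\<lambda>w. nu Y n i w) \<in> measurable (F n) (count_space UNIV)"
proof (induction n)
  case (Suc n)
  have nu_n: "(\<lambda>w. nu Y n i w) \<in> measurable (F (Suc n)) (count_space UNIV)"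
    using measurable_F_mono[OF lessI[THEN less_imp_le] Suc] .
  have "(\<lambda>w. Suc (nu Y n i w)) \<in> measurable (F (Suc n)) (count_space UNIV)"
    using measurable_compose[OF nu_n, of Suc] by simp
  from this nu_n show ?case
    unfolding nu_Suc by (rule measurable_If[OF _ _ selected_F_Suc])
qed simp

lemma borel_measurable_nu_comp: "(\<lambda>w. h (nu Y n i w) :: real) \<in> borel_measurable (F n)"
  using measurable_nu by (rule measurable_compose) simp

lemma borel_measurable_hold_est: "(\<lambda>w. hold_est Y X T0 \<beta> n w i) \<in> borel_measurable (F n)"
proof (induction n)
  case (Suc n)
  have T: "(\<lambda>w. hold_est Y X T0 \<beta> n w i) \<in> borel_measurable (F (Suc n))"
    using measurable_F_mono[OF lessI[THEN less_imp_le] Suc] .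
  have b: "(\<lambda>w. \<beta> (nu Y n i w)) \<in> borel_measurable (F (Suc n))"
    using measurable_F_mono[OF lessI[THEN less_imp_le] borel_measurable_nu_comp] .
  have \<tau>: "(\<lambda>w. fst (snd (X n i w))) \<in> borel_measurable (F (Suc n))"
    using X_meas measurable_fst_snd_sample_space by (rule measurable_compose)
  show ?case
    unfolding hold_est.simps
    by (rule measurable_If[OF borel_measurable_add[OF T borel_measurable_times[OF b borel_measurable_diff[OF \<tau> T]]]
          T selected_F_Suc])
qed simp

end

lemma exp_mult_one_minus_le_one:
  fixes b c :: real
  assumes "0 \<le> b" "b \<le> 1" "c \<le> 1"
  shows "exp (c * b) * (1 - b) \<le> 1"
proof -
  have "exp (c * b) * (1 - b) \<le> exp b * (1 - b)"
    using assms mult_right_mono[of c 1 b] by (intro mult_right_mono) auto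
  also have "\<dots> \<le> exp b * exp (- b)"
    using exp_ge_add_one_self[of "- b"] by (intro mult_left_mono) auto
  finally show ?thesis by (simp add: exp_minus)
qed

locale hold_est_lyapunov = sampling_scheme M F P Y X
  for M :: "'w measure" and F and P :: "'i \<Rightarrow> ('s \<times> real \<times> real) measure" and Y and X +
  fixes \<beta> :: "nat \<Rightarrow> real" and T0 :: "'i \<Rightarrow> real" and i :: 'i and c :: real
  assumes beta_nonneg: "\<And>n. 0 \<le> \<beta> n" and beta_le_one: "\<And>n. \<beta> n \<le> 1"
    and c_nonneg: "0 \<le> c" and c_le_one: "c \<le> 1"
    and summable_weight: "summable (\<lambda>j. exp (2 * c * (\<Sum>k<Suc j. \<beta> k)) * (\<beta> j)\<^sup>2)"
    and tau_square_integrable: "integrable (P i) (\<lambda>x. (fst (snd x))\<^sup>2)"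
begin

definition tau_mean :: real where
  "tau_mean = (\<integral>x. fst (snd x) \<partial>P i)"

definition noise :: "'s \<times> real \<times> real \<Rightarrow> real" where
  "noise x = fst (snd x) - tau_mean"

definition tau_var :: real where
  "tau_var = (\<integral>x. (noise x)\<^sup>2 \<partial>P i)"

definition growth :: "nat \<Rightarrow> real" where
  "growth m = exp (2 * c * (\<Sum>k<m. \<beta> k))"

definition tail :: "nat \<Rightarrow> real" where
  "tail m = (\<Sum>j. growth (Suc (j + m)) * (\<beta> (j + m))\<^sup>2)"

definition err :: "nat \<Rightarrow> 'w \<Rightarrow> real" where
  "err n w = hold_est Y X T0 \<beta> n w i - tau_mean"

text \<open>Since \<open>err (n + 1) = (1 - b) err n + b noise\<close> on a selection with
  step size \<open>b\<close>, the factor \<open>growth\<close> is chosen so that the drift is nonpositive, and the tail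
  sum pays for the variance that the noise adds.\<close>

definition lyap :: "nat \<Rightarrow> 'w \<Rightarrow> real" where
  "lyap n w = growth (nu Y n i w) * (err n w)\<^sup>2 + tau_var * tail (nu Y n i w)"

definition drift :: "nat \<Rightarrow> 'w \<Rightarrow> real" where
  "drift n w = (growth (Suc (nu Y n i w)) * (1 - \<beta> (nu Y n i w))\<^sup>2 - growth (nu Y n i w)) * (err n w)\<^sup>2"

definition noise_coeff :: "nat \<Rightarrow> 'w \<Rightarrow> real" where
  "noise_coeff n w = 2 * growth (Suc (nu Y n i w)) * \<beta> (nu Y n i w) * (1 - \<beta> (nu Y n i w)) * err n w"

definition var_coeff :: "nat \<Rightarrow> 'w \<Rightarrow> real" where
  "var_coeff n w = growth (Suc (nu Y n i w)) * (\<beta> (nu Y n i w))\<^sup>2"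

lemma growth_ge_one: "1 \<le> growth m"
  unfolding growth_def using c_nonneg beta_nonneg by (simp add: sum_nonneg)

lemma growth_Suc: "growth (Suc m) = growth m * (exp (c * \<beta> m))\<^sup>2"
  unfolding growth_def by (simp add: power2_eq_square exp_add[symmetric] algebra_simps)

lemma growth_le: "growth m \<le> exp (2 * real m)"
proof -
  have "c * (\<Sum>k<m. \<beta> k) \<le> 1 * real m"
    using sum_bounded_above[of "{..<m}" \<beta> 1] beta_le_one c_nonneg c_le_one beta_nonneg
    by (intro mult_mono) (auto simp: sum_nonneg)
  then show ?thesis unfolding growth_def by simp
qed

lemma summable_tail_terms: "summable (\<lambda>j. growth (Suc (j + m)) * (\<beta> (j + m))\<^sup>2)"
  using summable_ignore_initial_segment[OF summable_weight, of m] by (simp add: growth_def)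

lemma tail_nonneg: "0 \<le> tail m"
  unfolding tail_def using summable_tail_terms
  by (intro suminf_nonneg) (auto intro!: mult_nonneg_nonneg order.trans[OF zero_le_one growth_ge_one])

lemma tail_Suc: "tail m = growth (Suc m) * (\<beta> m)\<^sup>2 + tail (Suc m)"
  using suminf_split_head[OF summable_tail_terms[of m]] by (simp add: tail_def)

lemma noise_measurable: "noise \<in> borel_measurable sample_space"
  unfolding noise_def using measurable_fst_snd_sample_space by (rule borel_measurable_diff) simp

lemma noise_integrable: "integrable (P i) noise"
  and noise_square_integrable: "integrable (P i) (\<lambda>x. (noise x)\<^sup>2)"
  and integral_noise: "(\<integral>x. noise x \<partial>P i) = 0"
proof -
  interpret P: prob_space "P i" by (rule prob_space_P)
  have tau_meas: "(\<lambda>x. fst (snd x)) \<in> borel_measurable (P i)"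
    using measurable_fst_snd_sample_space sets_P measurable_cong_sets by blast
  have tau_integrable: "integrable (P i) (\<lambda>x. fst (snd x))"
    using tau_meas tau_square_integrable by (rule P.square_integrable_imp_integrable)
  then show "integrable (P i) noise"
    unfolding noise_def by simp
  show "(\<integral>x. noise x \<partial>P i) = 0"
    using tau_integrable by (simp add: noise_def tau_mean_def P.prob_space)
  have "integrable (P i) (\<lambda>x. (fst (snd x))\<^sup>2 - 2 * tau_mean * fst (snd x) + tau_mean\<^sup>2)"
    using tau_integrable tau_square_integrable by simp
  then show "integrable (P i) (\<lambda>x. (noise x)\<^sup>2)"
    by (simp add: noise_def power2_diff algebra_simps)
qed

lemma tau_var_nonneg: "0 \<le> tau_var"
  unfolding tau_var_def by simp

lemma lyap_nonneg: "0 \<le> lyap n w"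
  unfolding lyap_def using growth_ge_one[of "nu Y n i w"] tau_var_nonneg tail_nonneg by simp

lemma err_square_le_lyap: "growth (nu Y n i w) * (err n w)\<^sup>2 \<le> lyap n w"
  unfolding lyap_def using tau_var_nonneg tail_nonneg by simp

lemma lyap_0: "lyap 0 w = (T0 i - tau_mean)\<^sup>2 + tau_var * tail 0"
  by (simp add: lyap_def err_def growth_def)

lemma lyap_Suc:
  assumes "w \<in> space M"
  shows "lyap (Suc n) w = lyap n w + indicator (selected n i) w *
    (drift n w + noise_coeff n w * noise (X n i w) + var_coeff n w * ((noise (X n i w))\<^sup>2 - tau_var))"
proof (cases "i \<in> Y n w")
  case True
  define m b e \<xi> where "m = nu Y n i w" and "b = \<beta> m" and "e = err n w" and "\<xi> = noise (X n i w)"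
  have "lyap (Suc n) w = growth (Suc m) * ((1 - b) * e + b * \<xi>)\<^sup>2 + tau_var * tail (Suc m)"
    using True by (simp add: lyap_def nu_Suc err_def noise_def m_def b_def e_def \<xi>_def algebra_simps)
  moreover have "lyap n w = growth m * e\<^sup>2 + tau_var * (growth (Suc m) * b\<^sup>2 + tail (Suc m))"
    unfolding lyap_def m_def b_def e_def tail_Suc[of "nu Y n i w"] ..
  ultimately show ?thesis
    using True assms
    by (simp add: drift_def noise_coeff_def var_coeff_def selected_def m_def[symmetric]
        b_def[symmetric] e_def[symmetric] \<xi>_def[symmetric] power2_eq_square algebra_simps)
next
  case False
  with assms show ?thesis
    by (simp add: lyap_def nu_Suc err_def selected_def)
qed

lemma drift_nonpos: "drift n w \<le> 0"
proof -
  define b where "b = \<beta> (nu Y n i w)"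
  have "(exp (c * b) * (1 - b))\<^sup>2 \<le> 1"
    using exp_mult_one_minus_le_one[of b c] beta_nonneg beta_le_one c_le_one
    by (intro power_le_one) (auto simp: b_def)
  then have "growth (Suc (nu Y n i w)) * (1 - b)\<^sup>2 \<le> growth (nu Y n i w)"
    using growth_ge_one[of "nu Y n i w"]
    by (simp add: growth_Suc b_def[symmetric] power_mult_distrib mult.assoc mult_left_le)
  then show ?thesis
    unfolding drift_def b_def[symmetric] by (simp add: mult_nonpos_nonneg)
qed

end

context hold_est_lyapunov
begin

lemma borel_measurable_err: "(\<lambda>w. err n w) \<in> borel_measurable (F n)"
  unfolding err_def using borel_measurable_hold_est by (rule borel_measurable_diff) simp

lemma borel_measurable_nu_err:
  assumes "\<And>m. h m \<in> borel_measurable borel"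
  shows "(\<lambda>w. h (nu Y n i w) (err n w) :: real) \<in> borel_measurable (F n)"
  by (rule measurable_compose_countable[OF _ measurable_nu])
     (rule measurable_compose[OF borel_measurable_err assms])

lemma borel_measurable_lyap: "lyap n \<in> borel_measurable (F n)"
  unfolding lyap_def[abs_def]
  by (rule borel_measurable_nu_err[where h="\<lambda>m e. growth m * e\<^sup>2 + tau_var * tail m"]) simp

lemma borel_measurable_drift: "drift n \<in> borel_measurable (F n)"
  unfolding drift_def[abs_def]
  by (rule borel_measurable_nu_err[where h="\<lambda>m e. (growth (Suc m) * (1 - \<beta> m)\<^sup>2 - growth m) * e\<^sup>2"])
     simp

lemma borel_measurable_noise_coeff: "noise_coeff n \<in> borel_measurable (F n)"
  unfolding noise_coeff_def[abs_def]
  by (rule borel_measurable_nu_err[where h="\<lambda>m e. 2 * growth (Suc m) * \<beta> m * (1 - \<beta> m) * e"]) simp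

lemma borel_measurable_var_coeff: "var_coeff n \<in> borel_measurable (F n)"
  unfolding var_coeff_def[abs_def]
  by (rule borel_measurable_nu_err[where h="\<lambda>m e. growth (Suc m) * (\<beta> m)\<^sup>2"]) simp

lemma lyap_coeffs_bounded:
  assumes err: "(err n w)\<^sup>2 \<le> a"
  defines "K \<equiv> 2 * exp (2 * (real n + 1)) * (1 + a)"
  shows "\<bar>drift n w\<bar> \<le> K" "\<bar>noise_coeff n w\<bar> \<le> K" "\<bar>var_coeff n w\<bar> \<le> K"
proof -
  define E where "E = exp (2 * (real n + 1))"
  define m b e where "m = nu Y n i w" and "b = \<beta> m" and "e = err n w"
  have a: "0 \<le> a" using err by (rule order.trans[OF zero_le_power2])
  have "0 \<le> E * a" by (simp add: E_def a)
  then have EK: "E * (1 + a) \<le> K" "E * a \<le> K" "E \<le> K"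
    unfolding K_def E_def[symmetric] by (simp_all add: algebra_simps E_def)
  have "real m \<le> real n" using nu_le[of Y n i w] by (simp add: m_def)
  then have "exp (2 * real m) \<le> E" "exp (2 * real (Suc m)) \<le> E" by (simp_all add: E_def)
  then have E: "growth m \<le> E" "growth (Suc m) \<le> E"
    using growth_le[of m] growth_le[of "Suc m"] by linarith+
  have D: "0 \<le> growth m" "0 \<le> growth (Suc m)"
    using growth_ge_one[of m] growth_ge_one[of "Suc m"] by auto
  have b: "0 \<le> b" "b \<le> 1" using beta_nonneg beta_le_one by (auto simp: b_def)
  have e: "e\<^sup>2 \<le> a" "\<bar>e\<bar> \<le> 1 + a"
    using err abs_le_one_plus_square[of e] by (auto simp: e_def)
  have "growth (Suc m) * (1 - b)\<^sup>2 \<le> growth (Suc m)" "0 \<le> growth (Suc m) * (1 - b)\<^sup>2"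
    using b D by (auto intro!: mult_left_le power_le_one)
  then have "\<bar>growth (Suc m) * (1 - b)\<^sup>2 - growth m\<bar> \<le> E"
    using D E unfolding abs_le_iff by linarith
  then have "\<bar>growth (Suc m) * (1 - b)\<^sup>2 - growth m\<bar> * e\<^sup>2 \<le> E * a"
    using e(1) by (intro mult_mono) auto
  then show "\<bar>drift n w\<bar> \<le> K"
    using EK by (simp add: drift_def m_def[symmetric] b_def[symmetric] e_def[symmetric] abs_mult)
  have "growth (Suc m) * (b * (1 - b)) \<le> E"
    using b D E by (intro order.trans[OF mult_left_le]) (auto intro: mult_le_one)
  then have "growth (Suc m) * (b * (1 - b)) * \<bar>e\<bar> \<le> E * (1 + a)"
    using e(2) by (intro mult_mono) (auto simp: E_def)
  moreover have "\<bar>noise_coeff n w\<bar> = 2 * (growth (Suc m) * (b * (1 - b)) * \<bar>e\<bar>)"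
    using b D by (simp add: noise_coeff_def m_def[symmetric] b_def[symmetric] e_def[symmetric]
        abs_mult mult_ac)
  moreover have "K = 2 * (E * (1 + a))" unfolding K_def E_def by simp
  ultimately show "\<bar>noise_coeff n w\<bar> \<le> K" by simp
  have "growth (Suc m) * b\<^sup>2 \<le> E"
    using b D E by (intro order.trans[OF mult_left_le]) (auto intro: power_le_one)
  then show "\<bar>var_coeff n w\<bar> \<le> K"
    using D EK a by (simp add: var_coeff_def m_def[symmetric] b_def[symmetric])
qed

end

context hold_est_lyapunov
begin

lemma lyap_supermartingale_below:
  assumes G: "G \<in> sets (F n)" and below: "\<And>w. w \<in> G \<Longrightarrow> lyap n w < a"
  shows "integrable M (\<lambda>w. indicator G w * lyap (Suc n) w)"
    and "(\<integral>w. indicator G w * lyap (Suc n) w \<partial>M) \<le> (\<integral>w. indicator G w * lyap n w \<partial>M)"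
proof -
  interpret P: prob_space "P i" by (rule prob_space_P)
  define K where "K = 2 * exp (2 * (real n + 1)) * (1 + max a 0)"
  define S :: "'w \<Rightarrow> real" where "S = indicator (selected n i)"
  define g1 g2 g3 where "g1 w = indicator G w * drift n w"
    and "g2 w = indicator G w * noise_coeff n w" and "g3 w = indicator G w * var_coeff n w" for w
  define \<phi> where "\<phi> x = (noise x)\<^sup>2 - tau_var" for x
  have err_bound: "(err n w)\<^sup>2 \<le> max a 0" if "w \<in> G" for w
  proof -
    have "(err n w)\<^sup>2 \<le> growth (nu Y n i w) * (err n w)\<^sup>2"
      using growth_ge_one mult_right_mono[of 1 _ "(err n w)\<^sup>2"] by simp
    also have "\<dots> \<le> lyap n w" by (rule err_square_le_lyap)
    finally show ?thesis using below[OF that] by simp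
  qed
  have "\<bar>g1 w\<bar> \<le> K \<and> \<bar>g2 w\<bar> \<le> K \<and> \<bar>g3 w\<bar> \<le> K" for w
  proof (cases "w \<in> G")
    case True
    then show ?thesis
      using lyap_coeffs_bounded[OF err_bound[OF True]] by (simp add: g1_def g2_def g3_def K_def)
  next
    case False
    have "0 \<le> K" by (simp add: K_def)
    with False show ?thesis by (simp add: g1_def g2_def g3_def)
  qed
  then have g_bounded: "\<bar>g1 w\<bar> \<le> K" "\<bar>g2 w\<bar> \<le> K" "\<bar>g3 w\<bar> \<le> K" for w
    by blast+
  have ind_G: "(indicator G :: 'w \<Rightarrow> real) \<in> borel_measurable (F n)"
    using G by (rule borel_measurable_indicator)
  have g_meas: "g1 \<in> borel_measurable (F n)" "g2 \<in> borel_measurable (F n)" "g3 \<in> borel_measurable (F n)"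
    unfolding g1_def[abs_def] g2_def[abs_def] g3_def[abs_def]
    using ind_G borel_measurable_drift borel_measurable_noise_coeff borel_measurable_var_coeff
    by (auto intro: borel_measurable_times)
  have \<phi>: "\<phi> \<in> borel_measurable sample_space" "integrable (P i) \<phi>" "(\<integral>x. \<phi> x \<partial>P i) = 0"
    using noise_measurable noise_square_integrable by (auto simp: \<phi>_def[abs_def] tau_var_def P.prob_space)
  note I1 = integral_selected_sample[where \<phi>="\<lambda>_. 1", OF g_meas(1) g_bounded(1) borel_measurable_const
      P.integrable_const]
  note I2 = integral_selected_sample[OF g_meas(2) g_bounded(2) noise_measurable noise_integrable]
  note I3 = integral_selected_sample[OF g_meas(3) g_bounded(3) \<phi>(1,2)]
  have lyap_M: "lyap n \<in> borel_measurable M"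
    using borel_measurable_lyap by (rule measurable_from_subalg[OF subalgebra_F])
  have I0: "integrable M (\<lambda>w. indicator G w * lyap n w)"
  proof (rule integrable_const_bound[where B="max a 0"])
    show "AE w in M. norm (indicator G w * lyap n w) \<le> max a 0"
    proof (rule AE_I2)
      fix w show "norm (indicator G w * lyap n w) \<le> max a 0"
        using below[of w] lyap_nonneg[of n w] by (cases "w \<in> G") auto
    qed
    show "(\<lambda>w. indicator G w * lyap n w) \<in> borel_measurable M"
      using borel_measurable_indicator[OF subsetD[OF sets_F_subset G]] lyap_M
      by (rule borel_measurable_times)
  qed
  define V where "V w = indicator G w * lyap n w + S w * g1 w
      + S w * g2 w * noise (X n i w) + S w * g3 w * \<phi> (X n i w)" for w
  have increment: "indicator G w * lyap (Suc n) w = V w" if "w \<in> space M" for w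
    unfolding lyap_Suc[OF that, of n] by (simp add: V_def S_def g1_def g2_def g3_def \<phi>_def algebra_simps)
  have integrable_V: "integrable M V"
    using I0 I1(1) I2(1) I3(1) unfolding V_def[abs_def] S_def
    by (intro Bochner_Integration.integrable_add) simp_all
  have "integrable M (\<lambda>w. indicator G w * lyap (Suc n) w) \<longleftrightarrow> integrable M V"
    by (rule Bochner_Integration.integrable_cong[OF refl]) (simp add: increment)
  with integrable_V show "integrable M (\<lambda>w. indicator G w * lyap (Suc n) w)" by simp
  have "0 \<le> (\<integral>w. - (S w * g1 w) \<partial>M)"
    using drift_nonpos by (intro integral_nonneg_AE) (auto simp: S_def g1_def indicator_def)
  then have "integral\<^sup>L M V \<le> (\<integral>w. indicator G w * lyap n w \<partial>M)"
    using I0 I1 I2 I3 integral_noise \<phi>(3) unfolding V_def[abs_def]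
    by (simp add: S_def P.prob_space)
  moreover have "(\<integral>w. indicator G w * lyap (Suc n) w \<partial>M) = integral\<^sup>L M V"
    by (rule Bochner_Integration.integral_cong[OF refl]) (simp add: increment)
  ultimately show "(\<integral>w. indicator G w * lyap (Suc n) w \<partial>M) \<le> (\<integral>w. indicator G w * lyap n w \<partial>M)"
    by simp
qed

lemma AE_lyap_bounded: "AE w in M. \<exists>C. \<forall>n. lyap n w \<le> C"
proof (rule AE_bounded_of_maximal_inequality)
  show "lyap n \<in> borel_measurable M" for n
    using borel_measurable_lyap by (rule measurable_from_subalg[OF subalgebra_F])
  show "prob {w \<in> space M. \<exists>k\<le>n. a \<le> lyap k w} \<le> ((T0 i - tau_mean)\<^sup>2 + tau_var * tail 0) / a"
    if "0 < a" for a n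
    using borel_measurable_lyap lyap_nonneg _ lyap_supermartingale_below that
    by (rule maximal_inequality) (simp add: lyap_0)
qed

lemma AE_hold_est_error_bound:
  "AE w in M. \<exists>C. \<forall>n. \<bar>hold_est Y X T0 \<beta> n w i - (\<integral>x. fst (snd x) \<partial>P i)\<bar>
      \<le> C * exp (- c * (\<Sum>k<nu Y n i w. \<beta> k))"
  using AE_lyap_bounded
proof eventually_elim
  case (elim w)
  then obtain C where C: "\<And>n. lyap n w \<le> C" by blast
  have "\<bar>err n w\<bar> \<le> sqrt C * exp (- c * (\<Sum>k<nu Y n i w. \<beta> k))" for n
  proof -
    define s where "s = c * (\<Sum>k<nu Y n i w. \<beta> k)"
    have "growth (nu Y n i w) = (exp s)\<^sup>2"
      by (simp add: growth_def s_def power2_eq_square exp_add[symmetric] mult_2[symmetric] mult.assoc)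
    then have "(exp s * \<bar>err n w\<bar>)\<^sup>2 = growth (nu Y n i w) * (err n w)\<^sup>2"
      by (simp add: power_mult_distrib)
    also have "\<dots> \<le> C"
      using err_square_le_lyap C by (rule order.trans)
    finally have "exp s * \<bar>err n w\<bar> \<le> sqrt C"
      by (simp add: real_le_rsqrt)
    then show ?thesis
      by (simp add: s_def[symmetric] exp_minus field_simps)
  qed
  then show ?case
    unfolding err_def tau_mean_def by blast
qed

end

lemma ereal_le_of_tendsto:
  fixes L :: ereal
  assumes "u \<longlonglongrightarrow> x" and "\<And>k. L \<le> ereal (u k)"
  shows "L \<le> ereal x"
proof (rule LIMSEQ_le_const)
  show "(\<lambda>k. ereal (u k)) \<longlonglongrightarrow> ereal x" using assms(1) by simp
qed (use assms(2) in blast)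

lemma Suc_div_Suc_Suc: "0 < real (Suc k) / real (Suc (Suc k))" "real (Suc k) / real (Suc (Suc k)) < 1"
  and LIMSEQ_Suc_div_Suc_Suc: "(\<lambda>k. real (Suc k) / real (Suc (Suc k))) \<longlonglongrightarrow> 1"
  using LIMSEQ_Suc[OF LIMSEQ_n_over_Suc_n] by simp_all

lemma abs_inverse_max_diff_le:
  fixes x t \<eta> :: real
  assumes t: "0 < t" and \<eta>: "0 < \<eta>" "\<eta> \<le> t" and x: "\<bar>x - t\<bar> \<le> t / 2"
  shows "\<bar>1 / max x \<eta> - 1 / t\<bar> \<le> 2 / t\<^sup>2 * \<bar>x - t\<bar>"
proof -
  define m where "m = max x \<eta>"
  have "t / 2 \<le> x" using abs_le_D2[OF x] by linarith
  then have m: "t / 2 \<le> m" "\<bar>m - t\<bar> \<le> \<bar>x - t\<bar>"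
    using \<eta> by (auto simp: m_def max_def)
  have "\<bar>1 / m - 1 / t\<bar> = \<bar>m - t\<bar> / (m * t)"
    using m t by (simp add: field_simps abs_minus_commute)
  also have "\<dots> \<le> \<bar>x - t\<bar> / (t / 2 * t)"
    using m t by (intro frac_le mult_right_mono) auto
  also have "\<dots> = 2 / t\<^sup>2 * \<bar>x - t\<bar>"
    by (simp add: power2_eq_square field_simps)
  finally show ?thesis unfolding m_def .
qed

lemma eventually_inverse_error_le:
  fixes x \<eta> S :: "nat \<Rightarrow> real"
  assumes S: "filterlim S at_top sequentially" and r: "0 < r" and t: "0 < t"
    and \<eta>: "\<And>n. 0 < \<eta> n" "\<eta> \<longlonglongrightarrow> 0"
    and x: "\<forall>\<^sub>F n in sequentially. \<bar>x n - t\<bar> \<le> C * exp (- r * S n)"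
  shows "\<forall>\<^sub>F n in sequentially. \<bar>1 / max (x n) (\<eta> n) - 1 / t\<bar> \<le> 2 / t\<^sup>2 * C * exp (- r * S n)"
proof -
  have "filterlim (\<lambda>n. - r * S n) at_bot sequentially"
    using r S by (intro filterlim_tendsto_neg_mult_at_bot[OF tendsto_const]) auto
  then have "(\<lambda>n. C * exp (- r * S n)) \<longlonglongrightarrow> C * 0"
    by (intro tendsto_mult tendsto_const filterlim_compose[OF exp_at_bot])
  then have "\<forall>\<^sub>F n in sequentially. C * exp (- r * S n) < t / 2"
    using t by (intro order_tendstoD) auto
  moreover have "\<forall>\<^sub>F n in sequentially. \<eta> n < t"
    using \<eta>(2) t by (rule order_tendstoD)
  ultimately show ?thesis
    using x
  proof eventually_elim
    case (elim n)
    then have "\<bar>1 / max (x n) (\<eta> n) - 1 / t\<bar> \<le> 2 / t\<^sup>2 * \<bar>x n - t\<bar>"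
      using t \<eta>(1)[of n] by (intro abs_inverse_max_diff_le) auto
    also have "\<dots> \<le> 2 / t\<^sup>2 * (C * exp (- r * S n))"
      using elim by (intro mult_left_mono) auto
    finally show ?case by simp
  qed
qed

lemma limsup_eln_div_le:
  fixes \<delta> S :: "nat \<Rightarrow> real"
  assumes S: "filterlim S at_top sequentially" and B: "0 < B"
    and \<delta>: "\<forall>\<^sub>F n in sequentially. 0 \<le> \<delta> n \<and> \<delta> n \<le> B * exp (- r * S n)"
  shows "limsup (\<lambda>n. eln (\<delta> n) / ereal (S n)) \<le> ereal (- r)"
proof (rule ereal_le_epsilon2)
  fix e :: real assume e: "0 < e"
  have "\<forall>\<^sub>F n in sequentially. max 1 (ln B / e) \<le> S n"
    using S unfolding filterlim_at_top by blast
  with \<delta> have "\<forall>\<^sub>F n in sequentially. eln (\<delta> n) / ereal (S n) \<le> ereal (- r) + ereal e"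
  proof eventually_elim
    case (elim n)
    then have S_pos: "0 < S n" and "ln B \<le> e * S n"
      using e by (auto simp: field_simps)
    show ?case
    proof (cases "\<delta> n = 0")
      case False
      then have "ln (\<delta> n) \<le> ln (B * exp (- r * S n))"
        using elim B by (subst ln_le_cancel_iff) auto
      also have "\<dots> = ln B - r * S n"
        using B by (simp add: ln_mult)
      also have "\<dots> \<le> (- r + e) * S n"
        using \<open>ln B \<le> e * S n\<close> by (simp add: algebra_simps)
      finally show ?thesis
        using False S_pos by (simp add: eln_def field_simps)
    qed (use S_pos in \<open>simp add: eln_def\<close>)
  qed
  then show "limsup (\<lambda>n. eln (\<delta> n) / ereal (S n)) \<le> ereal (- r) + ereal e"
    by (rule Limsup_bounded)
qed

lemma sum_lower_bound_of_eventually_dominated: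
  fixes \<alpha> \<beta> :: "nat \<Rightarrow> real"
  assumes \<alpha>: "\<And>k. 0 \<le> \<alpha> k" "\<And>k. \<alpha> k \<le> B" and \<beta>: "\<And>k. 0 \<le> \<beta> k" and v: "0 \<le> v"
    and dominated: "\<forall>\<^sub>F k in sequentially. v * \<alpha> k \<le> \<beta> k"
  obtains K where "\<And>m. v * (\<Sum>k\<le>m. \<alpha> k) - K \<le> (\<Sum>k<m. \<beta> k)"
proof -
  obtain n0 where n0: "\<And>k. n0 \<le> k \<Longrightarrow> v * \<alpha> k \<le> \<beta> k"
    using dominated by (auto simp: eventually_sequentially)
  have below: "v * (\<Sum>k<m. \<alpha> k) - v * (\<Sum>k<n0. \<alpha> k) \<le> (\<Sum>k<m. \<beta> k)" for m
  proof (induction m)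
    case 0
    then show ?case using v \<alpha> by (simp add: sum_nonneg)
  next
    case (Suc m)
    show ?case
    proof (cases "Suc m \<le> n0")
      case True
      then have "v * (\<Sum>k<Suc m. \<alpha> k) \<le> v * (\<Sum>k<n0. \<alpha> k)"
        using \<alpha> v by (intro mult_left_mono sum_mono2) auto
      moreover have "0 \<le> (\<Sum>k<Suc m. \<beta> k)" using \<beta> by (simp add: sum_nonneg)
      ultimately show ?thesis by linarith
    next
      case False
      then show ?thesis using Suc n0[of m] by (simp add: algebra_simps)
    qed
  qed
  show ?thesis
  proof (rule that)
    fix m
    have "v * (\<Sum>k\<le>m. \<alpha> k) \<le> v * (\<Sum>k<m. \<alpha> k) + v * B"
      using \<alpha>(2)[of m] v by (simp add: lessThan_Suc_atMost[symmetric] distrib_left mult_left_mono)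
    then show "v * (\<Sum>k\<le>m. \<alpha> k) - v * (B + (\<Sum>k<n0. \<alpha> k)) \<le> (\<Sum>k<m. \<beta> k)"
      using below[of m] by (simp add: algebra_simps)
  qed
qed

lemma eventually_sum_upto_ge:
  fixes \<alpha> :: "nat \<Rightarrow> real" and \<nu> :: "nat \<Rightarrow> nat"
  assumes S: "filterlim (\<lambda>n. \<Sum>k\<le>n. \<alpha> k) at_top sequentially"
    and unif: "\<And>x. 0 < x \<Longrightarrow> x < 1 \<Longrightarrow> uniform_limit {x..1}
        (\<lambda>n y. (\<Sum>k\<le>nat \<lfloor>y * real n\<rfloor>. \<alpha> k) / (\<Sum>k\<le>n. \<alpha> k)) (\<lambda>y. 1) sequentially"
    and \<nu>: "\<And>n. \<nu> n \<le> n" and \<Delta>: "0 < \<Delta>" "ereal \<Delta> \<le> Liminf sequentially (\<lambda>n. ereal (real (\<nu> n) / real n))"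
    and \<rho>: "\<rho> < 1"
  shows "\<forall>\<^sub>F n in sequentially. \<rho> * (\<Sum>k\<le>n. \<alpha> k) \<le> (\<Sum>k\<le>\<nu> n. \<alpha> k)"
proof -
  define x where "x = min (\<Delta> / 2) (1 / 2)"
  have x: "0 < x" "x < 1" "x < \<Delta>" using \<Delta>(1) by (auto simp: x_def)
  have "\<forall>\<^sub>F n in sequentially. ereal x < ereal (real (\<nu> n) / real n)"
    using le_Liminf_iff[THEN iffD1, OF \<Delta>(2), rule_format, of "ereal x"] x(3) by simp
  moreover have "\<forall>\<^sub>F n in sequentially. \<forall>y\<in>{x..1}.
      dist ((\<Sum>k\<le>nat \<lfloor>y * real n\<rfloor>. \<alpha> k) / (\<Sum>k\<le>n. \<alpha> k)) 1 < 1 - \<rho>"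
    using uniform_limitD[OF unif[OF x(1,2)]] \<rho> by simp
  moreover have "\<forall>\<^sub>F n in sequentially. 0 < (\<Sum>k\<le>n. \<alpha> k)"
    using S by (simp add: filterlim_at_top_dense)
  moreover have "\<forall>\<^sub>F n in sequentially. 1 \<le> n" by (rule eventually_ge_at_top)
  ultimately show ?thesis
  proof eventually_elim
    case (elim n)
    define y where "y = real (\<nu> n) / real n"
    have "y \<in> {x..1}" "nat \<lfloor>y * real n\<rfloor> = \<nu> n"
      using elim \<nu>[of n] by (auto simp: y_def)
    then have "dist ((\<Sum>k\<le>\<nu> n. \<alpha> k) / (\<Sum>k\<le>n. \<alpha> k)) 1 < 1 - \<rho>"
      using elim by metis
    then have "\<rho> < (\<Sum>k\<le>\<nu> n. \<alpha> k) / (\<Sum>k\<le>n. \<alpha> k)"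
      by (simp add: dist_real_def abs_less_iff)
    then show ?case using elim by (simp add: field_simps)
  qed
qed

lemma limsup_rate_of_error_bound:
  fixes \<alpha> \<beta> \<eta> :: "nat \<Rightarrow> real" and T :: "nat \<Rightarrow> 'i::finite \<Rightarrow> real" and t K :: "'i \<Rightarrow> real"
    and \<nu> :: "'i \<Rightarrow> nat \<Rightarrow> nat"
  assumes \<alpha>: "\<And>n. 0 \<le> \<alpha> n" "\<And>n. \<alpha> n \<le> B"
    and S: "filterlim (\<lambda>n. \<Sum>k\<le>n. \<alpha> k) at_top sequentially"
    and unif: "\<And>x. 0 < x \<Longrightarrow> x < 1 \<Longrightarrow> uniform_limit {x..1}
        (\<lambda>n y. (\<Sum>k\<le>nat \<lfloor>y * real n\<rfloor>. \<alpha> k) / (\<Sum>k\<le>n. \<alpha> k)) (\<lambda>y. 1) sequentially"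
    and \<beta>: "\<And>n. 0 \<le> \<beta> n" and dominated: "\<forall>\<^sub>F n in sequentially. v * \<alpha> n \<le> \<beta> n" and v: "0 < v"
    and \<nu>: "\<And>j n. \<nu> j n \<le> n"
    and \<Delta>: "0 < \<Delta>" "\<And>j. ereal \<Delta> \<le> Liminf sequentially (\<lambda>n. ereal (real (\<nu> j n) / real n))"
    and T: "\<And>j n. \<bar>T n j - t j\<bar> \<le> K j * exp (- c * (\<Sum>k<\<nu> j n. \<beta> k))"
    and t: "\<And>j. 0 < t j" and \<eta>: "\<And>n. 0 < \<eta> n" "\<eta> \<longlonglongrightarrow> 0" and K': "0 < K'" and c: "0 < c"
  shows "limsup (\<lambda>n. eln (K' * Max (range (\<lambda>j. \<bar>1 / max (T n j) (\<eta> n) - 1 / t j\<bar>)))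
      / ereal (\<Sum>k\<le>n. \<alpha> k)) \<le> ereal (- (c * v))"
proof -
  define S where "S n = (\<Sum>k\<le>n. \<alpha> k)" for n
  define \<delta> where "\<delta> n = K' * Max (range (\<lambda>j. \<bar>1 / max (T n j) (\<eta> n) - 1 / t j\<bar>))" for n
  obtain K0 where K0: "\<And>m. v * (\<Sum>k\<le>m. \<alpha> k) - K0 \<le> (\<Sum>k<m. \<beta> k)"
    using sum_lower_bound_of_eventually_dominated[OF \<alpha> \<beta> less_imp_le[OF v] dominated] by blast
  have "limsup (\<lambda>n. eln (\<delta> n) / ereal (S n)) \<le> ereal (- (c * v * \<rho>))" if \<rho>: "0 < \<rho>" "\<rho> < 1" for \<rho>
  proof -
    define r where "r = c * v * \<rho>"
    have r_pos: "0 < r" using c v \<rho> by (simp add: r_def)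
    define C where "C j = 2 / (t j)\<^sup>2 * (\<bar>K j\<bar> * exp (c * K0))" for j
    have C_nonneg: "0 \<le> C j" for j by (simp add: C_def)
    have "\<forall>\<^sub>F n in sequentially. \<bar>1 / max (T n j) (\<eta> n) - 1 / t j\<bar> \<le> C j * exp (- r * S n)" for j
    proof -
      have "\<forall>\<^sub>F n in sequentially. \<rho> * S n \<le> (\<Sum>k\<le>\<nu> j n. \<alpha> k)"
        unfolding S_def by (rule eventually_sum_upto_ge[where \<nu>="\<nu> j"]) (fact S unif \<nu> \<Delta> \<rho>)+
      then have "\<forall>\<^sub>F n in sequentially. \<bar>T n j - t j\<bar> \<le> \<bar>K j\<bar> * exp (c * K0) * exp (- r * S n)"
      proof eventually_elim
        case (elim n)
        have "v * (\<rho> * S n) - K0 \<le> (\<Sum>k<\<nu> j n. \<beta> k)"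
          using mult_left_mono[OF elim less_imp_le[OF v]] K0[of "\<nu> j n"] by simp
        then have "c * (v * (\<rho> * S n) - K0) \<le> c * (\<Sum>k<\<nu> j n. \<beta> k)"
          using c by (intro mult_left_mono) auto
        then have "- c * (\<Sum>k<\<nu> j n. \<beta> k) \<le> c * K0 + (- r * S n)"
          by (simp add: r_def algebra_simps)
        then have "K j * exp (- c * (\<Sum>k<\<nu> j n. \<beta> k)) \<le> \<bar>K j\<bar> * (exp (c * K0) * exp (- r * S n))"
          by (intro mult_mono) (auto simp: exp_add[symmetric])
        then show ?case using T[of n j] by (simp add: mult.assoc)
      qed
      then show ?thesis
        unfolding C_def by (rule eventually_inverse_error_le[OF S[folded S_def] r_pos t \<eta>])
    qed
    then have "\<forall>\<^sub>F n in sequentially. \<forall>j. \<bar>1 / max (T n j) (\<eta> n) - 1 / t j\<bar> \<le> C j * exp (- r * S n)"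
      by (rule eventually_all_finite)
    then have "\<forall>\<^sub>F n in sequentially. 0 \<le> \<delta> n \<and> \<delta> n \<le> K' * ((\<Sum>j\<in>UNIV. C j) + 1) * exp (- r * S n)"
    proof eventually_elim
      case (elim n)
      have "C j \<le> (\<Sum>j\<in>UNIV. C j)" for j
        by (rule member_le_sum) (auto simp: C_nonneg)
      then have "C j \<le> (\<Sum>j\<in>UNIV. C j) + 1" for j
        by (smt (verit))
      then have "Max (range (\<lambda>j. \<bar>1 / max (T n j) (\<eta> n) - 1 / t j\<bar>))
          \<le> ((\<Sum>j\<in>UNIV. C j) + 1) * exp (- r * S n)"
        using elim by (auto intro: order.trans mult_right_mono)
      moreover have "0 \<le> Max (range (\<lambda>j. \<bar>1 / max (T n j) (\<eta> n) - 1 / t j\<bar>))"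
        by (rule order.trans[OF abs_ge_zero Max_ge]) auto
      ultimately show ?case
        using K' by (simp add: \<delta>_def mult.assoc mult_left_mono)
    qed
    moreover have "0 < K' * ((\<Sum>j\<in>UNIV. C j) + 1)"
      using K' C_nonneg by (simp add: sum_nonneg add_nonneg_pos)
    ultimately show ?thesis
      unfolding r_def[symmetric] using limsup_eln_div_le[OF S[folded S_def]] by blast
  qed
  note rate = this
  show ?thesis
  proof (rule ereal_le_of_tendsto)
    show "(\<lambda>k. - (c * v * (real (Suc k) / real (Suc (Suc k))))) \<longlonglongrightarrow> - (c * v)"
      using tendsto_minus[OF tendsto_mult_left[OF LIMSEQ_Suc_div_Suc_Suc, of "c * v"]] by simp
    show "limsup (\<lambda>n. eln (K' * Max (range (\<lambda>j. \<bar>1 / max (T n j) (\<eta> n) - 1 / t j\<bar>)))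
        / ereal (\<Sum>k\<le>n. \<alpha> k)) \<le> ereal (- (c * v * (real (Suc k) / real (Suc (Suc k)))))" for k
      using rate[OF Suc_div_Suc_Suc] unfolding S_def \<delta>_def .
  qed
qed

lemma (in prob_space) integral_pos_of_prob_le_less_one:
  fixes \<tau> :: "'a \<Rightarrow> real"
  assumes \<tau>: "integrable M \<tau>" and nonneg: "AE x in M. 0 \<le> \<tau> x"
    and \<epsilon>: "0 < \<epsilon>" and small: "prob {x \<in> space M. \<tau> x \<le> \<epsilon>} < 1"
  shows "0 < (\<integral>x. \<tau> x \<partial>M)"
proof -
  define E where "E = {x \<in> space M. \<epsilon> < \<tau> x}"
  have E: "E \<in> events"
    unfolding E_def using borel_measurable_integrable[OF \<tau>] by measurable
  have "space M - E = {x \<in> space M. \<tau> x \<le> \<epsilon>}"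
    by (auto simp: E_def)
  then have "0 < prob E"
    using prob_compl[OF E] small by simp
  also have "prob E = (\<integral>x. indicator E x \<partial>M)"
    using E by simp
  finally have "0 < \<epsilon> * (\<integral>x. indicator E x \<partial>M)"
    using \<epsilon> by simp
  also have "\<dots> = (\<integral>x. \<epsilon> * indicator E x \<partial>M)"
    by simp
  also have "\<dots> \<le> (\<integral>x. \<tau> x \<partial>M)"
  proof (rule integral_mono_AE)
    show "integrable M (\<lambda>x. \<epsilon> * indicator E x)"
      using E by (intro integrable_mult_right integrable_real_indicator)
        (auto simp: less_top[symmetric] emeasure_finite)
    show "AE x in M. \<epsilon> * indicator E x \<le> \<tau> x"
      using nonneg by eventually_elim (auto simp: E_def indicator_def)
  qed (rule \<tau>)
  finally show ?thesis .
qed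

lemma lip_const_nonneg:
  assumes "sup_lipschitz f"
  shows "0 \<le> lip_const f"
proof -
  obtain L where L: "\<And>x y. \<bar>f x - f y\<bar> \<le> L * sup_norm (\<lambda>i. x i - y i)"
    using assms unfolding sup_lipschitz_def by blast
  have sup_norm_nonneg: "0 \<le> sup_norm z" for z :: "'a \<Rightarrow> real"
    unfolding sup_norm_def by (rule order.trans[OF abs_ge_zero Max_ge]) auto
  have "\<bar>f x - f y\<bar> \<le> max L 0 * sup_norm (\<lambda>i. x i - y i)" for x y
    using L[of x y] mult_right_mono[OF max.cobounded1 sup_norm_nonneg] by (rule order.trans)
  then have "max L 0 \<in> {L. 0 \<le> L \<and> (\<forall>x y. \<bar>f x - f y\<bar> \<le> L * sup_norm (\<lambda>i. x i - y i))}"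
    by simp
  then show ?thesis
    unfolding lip_const_def by (intro cInf_greatest) blast+
qed

lemma A_star_pos:
  assumes "\<And>i. 0 < tmean P i" and "cond_F f"
  shows "0 < A_star P f"
proof -
  have "0 < tmin P"
    unfolding tmin_def using assms(1) by (subst Min_gr_iff) auto
  moreover have "0 \<le> lip_const f"
    using assms(2) unfolding cond_F_def by (blast intro: lip_const_nonneg)
  ultimately show ?thesis
    unfolding A_star_def by (simp add: add_pos_nonneg)
qed

lemma R2_step_size_pos:
  fixes \<alpha> :: "nat \<Rightarrow> real"
  assumes a: "0 < a"
    and "(\<exists>A. a < A / 2 \<and> (\<forall>n. \<alpha> n = (if A * real n = 0 then 1 / A else 1 / (A * real n))) \<and> Q A)
       \<or> (\<exists>A. a < A \<and> (\<forall>n. \<alpha> n = (if A * real n * ln (real n) = 0 then 1 / A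
                         else 1 / (A * real n * ln (real n)))))"
  shows "0 < \<alpha> n"
  using assms(2)
proof (elim disjE exE conjE)
  fix A assume "a < A / 2" "\<forall>n. \<alpha> n = (if A * real n = 0 then 1 / A else 1 / (A * real n))"
  with a show ?thesis by simp
next
  fix A assume A: "a < A" and \<alpha>: "\<forall>n. \<alpha> n = (if A * real n * ln (real n) = 0 then 1 / A
      else 1 / (A * real n * ln (real n)))"
  show ?thesis
  proof (cases "A * real n * ln (real n) = 0")
    case False
    then have "n \<noteq> 0" "n \<noteq> 1" by auto
    then have "0 < ln (real n)" by simp
    with A a False \<alpha> show ?thesis by simp
  qed (use A a \<alpha> in simp)
qed

lemma bounded_of_summable_square:
  fixes a :: "nat \<Rightarrow> real"
  assumes "summable (\<lambda>n. (a n)\<^sup>2)"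
  shows "a n \<le> 1 + (\<Sum>n. (a n)\<^sup>2)"
proof -
  have "(a n)\<^sup>2 \<le> (\<Sum>n. (a n)\<^sup>2)"
    using sum_le_suminf[OF assms, of "{n}"] by simp
  moreover have "a n \<le> 1 + (a n)\<^sup>2"
    using abs_le_one_plus_square[of "a n"] by simp
  ultimately show ?thesis by simp
qed

lemma ell_rate:
  fixes l :: ereal and v a :: real
  assumes v: "0 < v" and a: "0 \<le> a" and l: "ereal a < - ereal v * l / 2"
  obtains cmax where "0 < cmax" "cmax \<le> 1" "ereal v * max (l / 2) (-1) = ereal (- (cmax * v))"
    "\<And>c. 0 < c \<Longrightarrow> c < cmax \<Longrightarrow> l < ereal (- 2 * c)"
proof (cases l)
  case (real r)
  have "- ereal v * l / 2 = ereal (- v * r / 2)" using real by simp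
  with l a have "v * r < 0" by simp
  then have r: "r < 0" using v by (simp add: mult_less_0_iff)
  have "max (ereal r / 2) (-1) = ereal (max (r / 2) (-1))"
    by (simp add: max_def one_ereal_def)
  then have "ereal v * max (l / 2) (-1) = ereal (- (min 1 (- r / 2) * v))"
    using real v by (simp add: min_def max_def algebra_simps)
  with r real show ?thesis by (intro that[of "min 1 (- r / 2)"]) auto
next
  case MInf
  then show ?thesis using v by (intro that[of 1]) auto
qed (use l v in simp)

lemma mult_exp_le_exp_diff:
  fixes \<kappa> b s :: real
  assumes "0 < \<kappa>"
  shows "b * exp (- \<kappa> * (s + b)) \<le> (exp (- \<kappa> * s) - exp (- \<kappa> * (s + b))) / \<kappa>"
proof -
  have "exp (- \<kappa> * (s + b)) * (1 + \<kappa> * b) \<le> exp (- \<kappa> * (s + b)) * exp (\<kappa> * b)"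
    by (intro mult_left_mono exp_ge_add_one_self) auto
  also have "\<dots> = exp (- \<kappa> * s)"
    by (simp add: exp_add[symmetric] algebra_simps)
  finally show ?thesis
    using assms by (simp add: field_simps)
qed

lemma summable_exp_sum_weighted_square:
  fixes \<beta> :: "nat \<Rightarrow> real"
  assumes \<beta>: "\<And>n. 0 \<le> \<beta> n" and l: "ell \<beta> < ereal l" and lc: "l + 2 * c < 0" and c: "0 \<le> c"
  shows "summable (\<lambda>j. exp (2 * c * (\<Sum>k<Suc j. \<beta> k)) * (\<beta> j)\<^sup>2)"
proof -
  define \<kappa> where "\<kappa> = - (l + 2 * c)"
  have \<kappa>: "0 < \<kappa>" using lc by (simp add: \<kappa>_def)
  define u where "u n = exp (- \<kappa> * (\<Sum>k<n. \<beta> k))" for n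
  have "decseq u"
    unfolding u_def decseq_def using \<kappa> \<beta> by (auto intro!: mult_left_mono sum_mono2)
  then obtain L where "u \<longlonglongrightarrow> L"
    using decseq_convergent[of u 0] by (auto simp: u_def)
  then have telescope: "summable (\<lambda>n. (u n - u (Suc n)) / \<kappa>)"
    by (intro summable_divide telescope_summable')
  have "\<forall>\<^sub>F n in sequentially. ereal (ln (\<beta> n) / (\<Sum>k\<le>n. \<beta> k)) < ereal l"
    using l unfolding ell_def by (rule Limsup_lessD)
  then have "\<forall>\<^sub>F n in sequentially.
      norm (exp (2 * c * (\<Sum>k<Suc n. \<beta> k)) * (\<beta> n)\<^sup>2) \<le> (u n - u (Suc n)) / \<kappa>"
  proof eventually_elim
    case (elim n)
    define s where "s = (\<Sum>k<n. \<beta> k)"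
    have tel: "\<beta> n * exp (- \<kappa> * (s + \<beta> n)) \<le> (u n - u (Suc n)) / \<kappa>"
      using mult_exp_le_exp_diff[OF \<kappa>] by (simp add: u_def s_def)
    show ?case
    proof (cases "\<beta> n = 0")
      case False
      then have b: "0 < \<beta> n" using \<beta>[of n] by simp
      have "0 \<le> s + \<beta> n" using \<beta> by (simp add: s_def sum_nonneg)
      moreover have "ln (\<beta> n) / (s + \<beta> n) < l"
        using elim by (simp add: s_def lessThan_Suc_atMost[symmetric] add.commute)
      moreover have "l < 0" using lc c by linarith
      ultimately have "ln (\<beta> n) < l * (s + \<beta> n)"
        by (cases "s + \<beta> n = 0") (auto simp: field_simps)
      then have "\<beta> n < exp (l * (s + \<beta> n))"
        using b by (metis exp_less_cancel_iff exp_ln)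
      then have "exp (2 * c * (s + \<beta> n)) * (\<beta> n)\<^sup>2 \<le> exp (2 * c * (s + \<beta> n)) * (\<beta> n * exp (l * (s + \<beta> n)))"
        using b by (intro mult_left_mono) (auto simp: power2_eq_square)
      also have "\<dots> = \<beta> n * exp (- \<kappa> * (s + \<beta> n))"
        by (simp add: \<kappa>_def exp_add[symmetric] algebra_simps)
      finally show ?thesis
        using tel by (simp add: s_def add.commute)
    qed (use tel in simp)
  qed
  then show ?thesis
    by (rule summable_comparison_test_ev[OF _ telescope])
qed

lemma (in sampling_scheme) AE_hold_est_error_bounds:
  fixes c :: "nat \<Rightarrow> real" and \<beta> :: "nat \<Rightarrow> real"
  assumes "\<And>n. 0 \<le> \<beta> n" "\<And>n. \<beta> n \<le> 1" "\<And>k. 0 \<le> c k" "\<And>k. c k \<le> 1"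
    and "\<And>k. summable (\<lambda>j. exp (2 * c k * (\<Sum>k<Suc j. \<beta> k)) * (\<beta> j)\<^sup>2)"
    and "integrable (P i) (\<lambda>x. (fst (snd x))\<^sup>2)"
  shows "AE w in M. \<forall>k. \<exists>C. \<forall>n. \<bar>hold_est Y X T0 \<beta> n w i - (\<integral>x. fst (snd x) \<partial>P i)\<bar>
      \<le> C * exp (- c k * (\<Sum>k<nu Y n i w. \<beta> k))"
  unfolding AE_all_countable
proof
  fix k
  interpret hold_est_lyapunov M F P Y X \<beta> T0 i "c k"
    by unfold_locales (use assms in auto)
  show "AE w in M. \<exists>C. \<forall>n. \<bar>hold_est Y X T0 \<beta> n w i - (\<integral>x. fst (snd x) \<partial>P i)\<bar>
      \<le> C * exp (- c k * (\<Sum>k<nu Y n i w. \<beta> k))"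
    by (rule AE_hold_est_error_bound)
qed

lemma cond_M_tau_integrable:
  assumes "cond_M P" "prob_space (P i)" "sets (P i) = sets sample_space"
  shows "integrable (P i) (\<lambda>x. (fst (snd x))\<^sup>2)" "integrable (P i) (\<lambda>x. fst (snd x))"
proof -
  interpret prob_space "P i" by (rule assms(2))
  show sq: "integrable (P i) (\<lambda>x. (fst (snd x))\<^sup>2)"
    using assms(1) unfolding cond_M_def by blast
  have "(\<lambda>x. fst (snd x)) \<in> borel_measurable (P i)"
    using measurable_fst_snd_sample_space assms(3) measurable_cong_sets by blast
  then show "integrable (P i) (\<lambda>x. fst (snd x))"
    using sq by (rule square_integrable_imp_integrable)
qed

lemma tmean_pos:
  assumes "cond_M P" "prob_space (P i)" "sets (P i) = sets sample_space"
    and "AE x in P i. fst (snd x) \<ge> 0"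
  shows "0 < tmean P i"
proof -
  obtain \<epsilon> where \<epsilon>: "0 < \<epsilon>" and small: "measure (P i) {x. fst (snd x) \<le> \<epsilon>} < 1"
    using assms(1) unfolding cond_M_def by blast
  have "space (P i) = UNIV"
    using sets_eq_imp_space_eq[OF assms(3)] by (simp add: sample_space_def space_pair_measure)
  with small have "measure (P i) {x \<in> space (P i). fst (snd x) \<le> \<epsilon>} < 1" by simp
  then show ?thesis
    unfolding tmean_def
    by (rule prob_space.integral_pos_of_prob_le_less_one[OF assms(2)
          cond_M_tau_integrable(2)[OF assms(1-3)] assms(4) \<epsilon>])
qed

theorem lemma4p8:
  fixes M :: "'w measure"
    and F :: "nat \<Rightarrow> 'w measure"
    and P :: "'s::finite \<times> 'a::finite \<Rightarrow> ('s \<times> real \<times> real) measure"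
    and f :: "('s \<times> 'a \<Rightarrow> real) \<Rightarrow> real"
    and Q0 T0 :: "'s \<times> 'a \<Rightarrow> real"
    and \<alpha> \<beta> \<eta> :: "nat \<Rightarrow> real"
    and Y :: "nat \<Rightarrow> 'w \<Rightarrow> ('s \<times> 'a) set"
    and X :: "nat \<Rightarrow> 's \<times> 'a \<Rightarrow> 'w \<Rightarrow> 's \<times> real \<times> real"
    and vsig K' :: real
  assumes M: "prob_space M"
    (* SMDP laws *)
    and P_prob: "\<And>i. prob_space (P i)"
    and P_sets: "\<And>i. sets (P i) = sets sample_space"
    and P_tau_nonneg: "\<And>i. AE x in P i. fst (snd x) \<ge> 0"
    and condM: "cond_M P"
    and wc: "weakly_communicating (ptrans P)"
    (* (F) *)
    and condF: "cond_F f"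
    (* filtration (the past) and the sampling scheme *)
    and F_sub: "\<And>n. subalgebra M (F n)"
    and F_mono: "\<And>n. sets (F n) \<subseteq> sets (F (Suc n))"
    and Y_meas: "\<And>n i. {w \<in> space M. i \<in> Y n w} \<in> sets (F n)"
    and Y_nonempty: "\<And>n w. w \<in> space M \<Longrightarrow> Y n w \<noteq> {}"
    and X_meas: "\<And>n i. X n i \<in> measurable (F (Suc n)) sample_space"
    and X_law: "\<And>n i A B. A \<in> sets sample_space \<Longrightarrow> B \<in> sets (F n) \<Longrightarrow>
        measure M {w \<in> space M. w \<in> B \<and> i \<in> Y n w \<and> X n i w \<in> A}
          = measure (P i) A * measure M {w \<in> space M. w \<in> B \<and> i \<in> Y n w}"
    (* initial values *)
    and T0_nonneg: "\<And>i. T0 i \<ge> 0"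
    (* (R)(i) *)
    and R_alpha: "cond_R_alpha \<alpha>"
    and R_nu: "\<exists>\<Delta>>0. AE w in M. \<forall>i.
        Liminf sequentially (\<lambda>n. ereal (real (nu Y n i w) / real n)) \<ge> ereal \<Delta>"
    and R_ratio: "\<And>x. x > 0 \<Longrightarrow> AE w in M. \<forall>i j. convergent (\<lambda>n.
        (\<Sum>k = nu Y n i w..nu Y (Nidx \<alpha> n x) i w. \<alpha> k) /
        (\<Sum>k = nu Y n j w..nu Y (Nidx \<alpha> n x) j w. \<alpha> k))"
    (* (R)(ii) *)
    and R_beta: "cond_R_beta \<beta>"
    (* (R)(iii) *)
    and R_eta_pos: "\<And>n. \<eta> n > 0"
    and R_eta_lim: "\<eta> \<longlonglongrightarrow> 0"
    (* (R2)(i) *)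
    and R2_i:
      "(\<exists>A. A / 2 > A_star P f \<and>
            (\<forall>n. \<alpha> n = (if A * real n = 0 then 1 / A else 1 / (A * real n))) \<and>
            (\<exists>\<gamma>>0. \<gamma> * A > A_star P f \<and>
               (AE w in M. \<forall>i. \<exists>p. 0 < p \<and> p \<le> 1 \<and>
                   (\<lambda>n. real (nu Y n i w) / real n) \<longlonglongrightarrow> p \<and>
                   limsup (\<lambda>n. ereal (real n powr \<gamma> * \<bar>real (nu Y n i w) / real n - p\<bar>)) < \<infinity>)))
       \<or> (\<exists>A. A > A_star P f \<and>
            (\<forall>n. \<alpha> n = (if A * real n * ln (real n) = 0 then 1 / A
                         else 1 / (A * real n * ln (real n)))))"
    (* (R2)(ii) *)
    and R2_ii_sig: "vsig > A_star P f"
    and R2_ii_beta: "\<forall>\<^sub>F n in sequentially. \<beta> n \<ge> vsig * \<alpha> n"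
    and R2_ii_ell: "- ereal vsig * ell \<beta> / 2 > ereal (A_star P f)"
    (* K' *)
    and K'_pos: "K' > 0"
  shows "AE w in M.
     limsup (\<lambda>n. eln (K' * Max (range (\<lambda>i.
               \<bar>1 / max (snd (QT Q0 T0 \<alpha> \<beta> \<eta> f Y X n w) i) (\<eta> n) - 1 / tmean P i\<bar>)))
             / ereal (\<Sum>k\<le>n. \<alpha> k))
       \<le> ereal vsig * max (ell \<beta> / 2) (-1)"
proof -
  have t: "0 < tmean P i" for i
    using condM P_prob P_sets P_tau_nonneg by (rule tmean_pos)
  have A: "0 < A_star P f"
    using t condF by (rule A_star_pos)
  have v: "0 < vsig"
    using R2_ii_sig A by linarith
  note R_alpha' = R_alpha[unfolded cond_R_alpha_def]
  have S: "filterlim (\<lambda>n. \<Sum>k\<le>n. \<alpha> k) at_top sequentially"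
    using R_alpha' by (rule conjunct1)
  have \<alpha>_square: "summable (\<lambda>n. (\<alpha> n)\<^sup>2)"
    using R_alpha'[THEN conjunct2] by (rule conjunct1)
  have unif: "uniform_limit {x..1}
      (\<lambda>n y. (\<Sum>k\<le>nat \<lfloor>y * real n\<rfloor>. \<alpha> k) / (\<Sum>k\<le>n. \<alpha> k)) (\<lambda>y. 1) sequentially"
    if "0 < x" "x < 1" for x
    using R_alpha'[THEN conjunct2, THEN conjunct2, THEN conjunct2, rule_format, OF conjI[OF that]]
    by (rule conjunct2)
  have \<alpha>_pos: "0 < \<alpha> n" for n
    using A R2_i by (rule R2_step_size_pos)
  have \<beta>: "\<And>n. 0 \<le> \<beta> n" "\<And>n. \<beta> n \<le> 1"
    using R_beta by (simp_all add: cond_R_beta_def)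
  obtain cmax where cmax: "0 < cmax" "cmax \<le> 1"
    and rhs: "ereal vsig * max (ell \<beta> / 2) (-1) = ereal (- (cmax * vsig))"
    and ell: "\<And>c. 0 < c \<Longrightarrow> c < cmax \<Longrightarrow> ell \<beta> < ereal (- 2 * c)"
    using ell_rate[OF v less_imp_le[OF A] R2_ii_ell] by blast
  define c where "c k = cmax * (real (Suc k) / real (Suc (Suc k)))" for k
  have c: "0 < c k" "c k < cmax" for k
    using mult_pos_pos[OF cmax(1) Suc_div_Suc_Suc(1)] mult_strict_left_mono[OF Suc_div_Suc_Suc(2) cmax(1)]
    by (simp_all add: c_def)
  interpret sampling_scheme M F P Y X
    by (intro sampling_scheme.intro filtered_prob_space.intro filtered_prob_space_axioms.intro
        sampling_scheme_axioms.intro) (fact M F_sub F_mono P_prob P_sets Y_meas X_meas X_law)+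
  have summable: "summable (\<lambda>j. exp (2 * c k * (\<Sum>k<Suc j. \<beta> k)) * (\<beta> j)\<^sup>2)" for k
  proof -
    obtain l where "ell \<beta> < ereal l" "l < - 2 * c k"
      using ereal_dense2[OF ell[OF c(1,2)]] by auto
    then show ?thesis
      using \<beta>(1) c(1)[of k] by (intro summable_exp_sum_weighted_square) auto
  qed
  have c_le_one: "c k \<le> 1" for k
    using c(2)[of k] cmax(2) by linarith
  have errors: "AE w in M. \<forall>i k. \<exists>C. \<forall>n. \<bar>hold_est Y X T0 \<beta> n w i - tmean P i\<bar>
      \<le> C * exp (- c k * (\<Sum>k<nu Y n i w. \<beta> k))"
    unfolding tmean_def
  proof (rule AE_all_countable[THEN iffD2], rule allI)
    fix i
    show "AE w in M. \<forall>k. \<exists>C. \<forall>n. \<bar>hold_est Y X T0 \<beta> n w i - (\<integral>x. fst (snd x) \<partial>P i)\<bar>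
        \<le> C * exp (- c k * (\<Sum>k<nu Y n i w. \<beta> k))"
      using \<beta> less_imp_le[OF c(1)] c_le_one summable cond_M_tau_integrable(1)[OF condM P_prob P_sets]
      by (rule AE_hold_est_error_bounds)
  qed
  obtain \<Delta> where \<Delta>: "0 < \<Delta>" "AE w in M. \<forall>i. Liminf sequentially (\<lambda>n. ereal (real (nu Y n i w) / real n)) \<ge> ereal \<Delta>"
    using R_nu by blast
  show ?thesis
    using errors \<Delta>(2)
  proof eventually_elim
    case (elim w)
    show ?case
      unfolding rhs
    proof (rule ereal_le_of_tendsto)
      show "(\<lambda>k. - (c k * vsig)) \<longlonglongrightarrow> - (cmax * vsig)"
        using tendsto_minus[OF tendsto_mult_right[OF tendsto_mult_left[OF LIMSEQ_Suc_div_Suc_Suc]]]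
        by (simp add: c_def)
      fix k
      have "\<forall>i. \<exists>C. \<forall>n. \<bar>hold_est Y X T0 \<beta> n w i - tmean P i\<bar>
          \<le> C * exp (- c k * (\<Sum>k<nu Y n i w. \<beta> k))"
      proof
        fix i
        show "\<exists>C. \<forall>n. \<bar>hold_est Y X T0 \<beta> n w i - tmean P i\<bar>
            \<le> C * exp (- c k * (\<Sum>k<nu Y n i w. \<beta> k))"
          using spec[OF spec[OF elim(1), of i], of k] .
      qed
      then obtain C where C: "\<forall>i n. \<bar>hold_est Y X T0 \<beta> n w i - tmean P i\<bar>
          \<le> C i * exp (- c k * (\<Sum>k<nu Y n i w. \<beta> k))"
        by (rule choice[THEN exE])
      show "limsup (\<lambda>n. eln (K' * Max (range (\<lambda>i. \<bar>1 / max (snd (QT Q0 T0 \<alpha> \<beta> \<eta> f Y X n w) i) (\<eta> n)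
          - 1 / tmean P i\<bar>))) / ereal (\<Sum>k\<le>n. \<alpha> k)) \<le> ereal (- (c k * vsig))"
        unfolding snd_QT
        by (rule limsup_rate_of_error_bound[OF less_imp_le[OF \<alpha>_pos] bounded_of_summable_square[OF \<alpha>_square]
              S unif \<beta>(1) _ v nu_le \<Delta>(1) _ C[rule_format] t R_eta_pos R_eta_lim K'_pos c(1)])
           (use R2_ii_beta elim(2) in auto)
    qed
  qed
qed

end
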